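(* Let $Q=(E_0,E_1,\mathbf U,\boldsymbol\alpha)$ be a quiver representation over $\mathbb{F}_q$, let $a,b\in E_0$, let $Q'=\Omega(Q,a,b)$ and $\pi=\pi^{Q'}_Q$. Let $\mathbf X\in\operatorname{End}(Q)$ and let $H$ be a subgroup of $\operatorname{Aut}(Q)$ fixing $\mathbf X$ under conjugation. Then $$\gamma\big(H^{Q'},\pi^{-1}(\mathbf X)\big)=\gamma\big(H,\mathcal I(X_a,X_b)\big),$$ where $H^{Q'}$ acts on $\pi^{-1}(\mathbf X)\subseteq\operatorname{End}(Q')$ by conjugation and $H$ acts on $\mathcal I(X_a,X_b)$ by $\mathbf g\cdot R=g_bRg_a^{-1}$.
   Context: $\gamma(G,X)$ is the number of orbits of a group $G$ on a finite set $X$. A quiver representation $Q=(E_0,E_1,\mathbf U,\boldsymbol\alpha)$: finite sets $E_0$ (vertices), $E_1$ (arrows), source/target maps $\sigma,\tau:E_1\to E_0$, finite-dimensional spaces $U_c$ ($c\in E_0$), linear maps $\alpha_e:U_{\sigma(e)}\to U_{\tau(e)}$. $\operatorname{End}(Q)$ is the ring of tuples $(X_c)_{c\in E_0}$, $X_c\in\operatorname{End}(U_c)$, with $\alpha_eX_{\sigma(e)}=X_{\tau(e)}\alpha_e$ for all $e$; $\operatorname{Aut}(Q)$ is its unit group, acting on $\operatorname{End}(Q)$ by componentwise conjugation. $Q'$ is an extension of $Q$ if its vertex set contains $E_0$, its spaces at $E_0$ coincide with those of $Q$, and restriction of any endomorphism of $Q'$ to $E_0$ is an endomorphism of $Q$;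 then $\pi^{Q'}_Q$ is this restriction map, and for $H\le\operatorname{Aut}(Q)$, $H^{Q'}=\pi^{-1}(H)\cap\operatorname{Aut}(Q')$. $\Omega(Q,a,b)$ is the extension obtained from $Q$ by adding a new vertex $c$ with a space $U'_c$ of dimension $\dim U_a+\dim U_b$ and two arrows $e_1:a\to c$, $e_2:c\to b$ whose maps form a short exact sequence $0\to U_a\to U'_c\to U_b\to 0$ (first injective, second surjective, image of first = kernel of second). $\mathcal I(X_a,X_b)=\{S\in\operatorname{Hom}(U_a,U_b):SX_a=X_bS\}$. *)

theory Defs
  imports "Jordan_Normal_Form.Matrix" "HOL-Library.FuncSet"
begin

text \<open>Finite-dimensional spaces over a finite field are modelled as coordinate spaces
  'a^n (column vectors), linear maps as matrices.\<close>

record ('v, 'e, 'a) quiver_rep =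
  verts :: "'v set"
  arrs  :: "'e set"
  src   :: "'e \<Rightarrow> 'v"
  tgt   :: "'e \<Rightarrow> 'v"
  dim   :: "'v \<Rightarrow> nat"
  amap  :: "'e \<Rightarrow> 'a mat"

definition is_quiver_rep :: "('v, 'e, 'a) quiver_rep \<Rightarrow> bool" where
  "is_quiver_rep Q \<longleftrightarrow> finite (verts Q) \<and> finite (arrs Q) \<and>
     (\<forall>e\<in>arrs Q. src Q e \<in> verts Q \<and> tgt Q e \<in> verts Q \<and>
        amap Q e \<in> carrier_mat (dim Q (tgt Q e)) (dim Q (src Q e)))"

definition End_Q :: "('v, 'e, 'a::semiring_1) quiver_rep \<Rightarrow> ('v \<Rightarrow> 'a mat) set" where
  "End_Q Q = {X. X \<in> extensional (verts Q) \<and>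
     (\<forall>c\<in>verts Q. X c \<in> carrier_mat (dim Q c) (dim Q c)) \<and>
     (\<forall>e\<in>arrs Q. amap Q e * X (src Q e) = X (tgt Q e) * amap Q e)}"

definition Aut_Q :: "('v, 'e, 'a::semiring_1) quiver_rep \<Rightarrow> ('v \<Rightarrow> 'a mat) set" where
  "Aut_Q Q = {X \<in> End_Q Q. \<exists>Y\<in>End_Q Q. \<forall>c\<in>verts Q.
      X c * Y c = 1\<^sub>m (dim Q c) \<and> Y c * X c = 1\<^sub>m (dim Q c)}"

definition matinv :: "'a::semiring_1 mat \<Rightarrow> 'a mat" where
  "matinv A = (THE B. B \<in> carrier_mat (dim_row A) (dim_row A) \<and>
      A * B = 1\<^sub>m (dim_row A) \<and> B * A = 1\<^sub>m (dim_row A))"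

definition tuple_one :: "('v, 'e, 'a::semiring_1) quiver_rep \<Rightarrow> 'v \<Rightarrow> 'a mat" where
  "tuple_one Q = (\<lambda>c\<in>verts Q. 1\<^sub>m (dim Q c))"

definition tuple_mult :: "('v, 'e, 'a::semiring_1) quiver_rep \<Rightarrow> ('v \<Rightarrow> 'a mat) \<Rightarrow> ('v \<Rightarrow> 'a mat) \<Rightarrow> 'v \<Rightarrow> 'a mat" where
  "tuple_mult Q g h = (\<lambda>c\<in>verts Q. g c * h c)"

definition tuple_inv :: "('v, 'e, 'a::semiring_1) quiver_rep \<Rightarrow> ('v \<Rightarrow> 'a mat) \<Rightarrow> 'v \<Rightarrow> 'a mat" where
  "tuple_inv Q g = (\<lambda>c\<in>verts Q. matinv (g c))"

definition is_subgroup_Aut :: "('v \<Rightarrow> 'a mat) set \<Rightarrow> ('v, 'e, 'a::semiring_1) quiver_rep \<Rightarrow> bool" where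
  "is_subgroup_Aut H Q \<longleftrightarrow> H \<subseteq> Aut_Q Q \<and> tuple_one Q \<in> H \<and>
     (\<forall>g\<in>H. \<forall>h\<in>H. tuple_mult Q g h \<in> H) \<and> (\<forall>g\<in>H. tuple_inv Q g \<in> H)"

definition conj_act :: "('v, 'e, 'a::semiring_1) quiver_rep \<Rightarrow> ('v \<Rightarrow> 'a mat) \<Rightarrow> ('v \<Rightarrow> 'a mat) \<Rightarrow> 'v \<Rightarrow> 'a mat" where
  "conj_act Q g X = (\<lambda>c\<in>verts Q. g c * X c * matinv (g c))"

definition num_orbits :: "'g set \<Rightarrow> ('g \<Rightarrow> 'x \<Rightarrow> 'x) \<Rightarrow> 'x set \<Rightarrow> nat" where
  "num_orbits G act S = card ((\<lambda>x. (\<lambda>g. act g x) ` G) ` S)"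

definition restr_to :: "('v, 'e, 'a) quiver_rep \<Rightarrow> ('v \<Rightarrow> 'a mat) \<Rightarrow> 'v \<Rightarrow> 'a mat" where
  "restr_to Q X = restrict X (verts Q)"

definition lift_group :: "('v, 'e, 'a::semiring_1) quiver_rep \<Rightarrow> ('v, 'e, 'a) quiver_rep \<Rightarrow> ('v \<Rightarrow> 'a mat) set \<Rightarrow> ('v \<Rightarrow> 'a mat) set" where
  "lift_group Q' Q H = {g \<in> Aut_Q Q'. restr_to Q g \<in> H}"

text \<open>Q' is (a choice of) Omega(Q,a,b), with new vertex c and new arrows e1 : a \<rightarrow> c, e2 : c \<rightarrow> b
  whose maps form a short exact sequence 0 \<rightarrow> U_a \<rightarrow> U'_c \<rightarrow> U_b \<rightarrow> 0.\<close>
definition is_Omega :: "('v, 'e, 'a::field) quiver_rep \<Rightarrow> 'v \<Rightarrow> 'v \<Rightarrow> ('v, 'e, 'a) quiver_rep \<Rightarrow> bool" where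
  "is_Omega Q a b Q' \<longleftrightarrow> (\<exists>c e1 e2.
     c \<notin> verts Q \<and> e1 \<notin> arrs Q \<and> e2 \<notin> arrs Q \<and> e1 \<noteq> e2 \<and>
     verts Q' = insert c (verts Q) \<and> arrs Q' = arrs Q \<union> {e1, e2} \<and>
     (\<forall>e\<in>arrs Q. src Q' e = src Q e \<and> tgt Q' e = tgt Q e \<and> amap Q' e = amap Q e) \<and>
     (\<forall>v\<in>verts Q. dim Q' v = dim Q v) \<and>
     dim Q' c = dim Q a + dim Q b \<and>
     src Q' e1 = a \<and> tgt Q' e1 = c \<and> src Q' e2 = c \<and> tgt Q' e2 = b \<and>
     amap Q' e1 \<in> carrier_mat (dim Q' c) (dim Q a) \<and>
     amap Q' e2 \<in> carrier_mat (dim Q b) (dim Q' c) \<and>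
     (\<forall>u\<in>carrier_vec (dim Q a). amap Q' e1 *\<^sub>v u = 0\<^sub>v (dim Q' c) \<longrightarrow> u = 0\<^sub>v (dim Q a)) \<and>
     (\<forall>w\<in>carrier_vec (dim Q b). \<exists>v\<in>carrier_vec (dim Q' c). amap Q' e2 *\<^sub>v v = w) \<and>
     (\<forall>v\<in>carrier_vec (dim Q' c). amap Q' e2 *\<^sub>v v = 0\<^sub>v (dim Q b) \<longleftrightarrow>
          (\<exists>u\<in>carrier_vec (dim Q a). v = amap Q' e1 *\<^sub>v u)))"

definition intertw :: "nat \<Rightarrow> nat \<Rightarrow> 'a::semiring_1 mat \<Rightarrow> 'a mat \<Rightarrow> 'a mat set" where
  "intertw na nb Xa Xb = {S \<in> carrier_mat nb na. S * Xa = Xb * S}"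

end

theory Submission
  imports Defs "HOL-Algebra.Group_Action"
begin

(* Both sides are computed with Burnside's lemma.  Let 0 -> U_a -i-> U'_c -p-> U_b -> 0 be the new
   exact sequence and choose a splitting s, R (so R i = 1, p s = 1, i R + s p = 1).  A matrix Z on
   U'_c with Z i = i A and p Z = B p is determined by A, B and its corner W = R Z s in Hom(U_b,U_a):
   it is the block matrix [[A, W], [0, B]] in the decomposition U'_c = U_a + U_b.  Consequently
     - every g in H has exactly |Hom(U_b,U_a)| lifts to Aut(Q'), and every Y over X is a block matrix;
     - a lift g' with corner M fixes Y with corner T iff  g_a T + M X_b = X_a M + T g_b.
   The pairs (T,M) solving this form the kernel of a linear map L, and a double counting with the
   trace pairing shows |ker L| = |Hom(U_b,U_a)| * |ker L*|, where ker L* consists of the S in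
   I(X_a,X_b) commuting with g in the sense S g_a = g_b S, i.e. the fixed points of g on I(X_a,X_b).
   Summing over g in H, the Burnside sum for H^{Q'} is |Hom(U_b,U_a)| times the one for H, and so is
   |H^{Q'}|, which gives the theorem. *)


section \<open>Burnside's lemma for explicitly given groups\<close>

text \<open>The library version of Burnside's lemma, restated for a group given by a carrier and explicit
  operations (as the tuple groups below are) acting on a finite set.\<close>

lemma burnside_explicit:
  fixes G :: "'g set" and mul :: "'g \<Rightarrow> 'g \<Rightarrow> 'g" and one :: 'g
    and act :: "'g \<Rightarrow> 'x \<Rightarrow> 'x" and E :: "'x set"
  assumes fin_G: "finite G" and fin_E: "finite E" and one: "one \<in> G"
    and mul_closed: "\<And>g h. g \<in> G \<Longrightarrow> h \<in> G \<Longrightarrow> mul g h \<in> G"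
    and mul_assoc: "\<And>g h k. g \<in> G \<Longrightarrow> h \<in> G \<Longrightarrow> k \<in> G \<Longrightarrow> mul (mul g h) k = mul g (mul h k)"
    and one_mul: "\<And>g. g \<in> G \<Longrightarrow> mul one g = g"
    and left_inv: "\<And>g. g \<in> G \<Longrightarrow> \<exists>h\<in>G. mul h g = one"
    and act_one: "\<And>x. x \<in> E \<Longrightarrow> act one x = x"
    and act_mul: "\<And>g h x. g \<in> G \<Longrightarrow> h \<in> G \<Longrightarrow> x \<in> E \<Longrightarrow> act (mul g h) x = act g (act h x)"
    and act_closed: "\<And>g x. g \<in> G \<Longrightarrow> x \<in> E \<Longrightarrow> act g x \<in> E"
  shows "num_orbits G act E * card G = (\<Sum>g\<in>G. card {x\<in>E. act g x = x})"
proof -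
  let ?G = "\<lparr>carrier = G, mult = mul, one = one\<rparr>"
  let ?phi = "\<lambda>g. restrict (act g) E"
  have grp: "group ?G"
    by (rule groupI) (auto simp: mul_closed one mul_assoc one_mul left_inv)
  then interpret Gr: group ?G .
  have bij: "?phi g \<in> Bij E" if g: "g \<in> G" for g
  proof -
    let ?h = "inv\<^bsub>?G\<^esub> g"
    have h: "?h \<in> G" "mul ?h g = one" "mul g ?h = one"
      using Gr.inv_closed[of g] Gr.l_inv[of g] Gr.r_inv[of g] g by simp_all
    have "bij_betw (act g) E E"
    proof (rule bij_betw_byWitness[where f' = "act ?h"])
      show "\<forall>x\<in>E. act ?h (act g x) = x" using act_mul[OF h(1) g] act_one h(2) by simp
      show "\<forall>x\<in>E. act g (act ?h x) = x" using act_mul[OF g h(1)] act_one h(3) by simp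
      show "act g ` E \<subseteq> E" "act ?h ` E \<subseteq> E" using act_closed g h(1) by auto
    qed
    thus ?thesis unfolding Bij_def by simp
  qed
  have "group_action ?G E ?phi"
    unfolding group_action_def group_hom_def group_hom_axioms_def
  proof (intro conjI grp group_BijGroup)
    show "?phi \<in> hom ?G (BijGroup E)"
    proof (rule homI)
      show "?phi x \<in> carrier (BijGroup E)" if "x \<in> carrier ?G" for x
        using bij that by (simp add: BijGroup_def)
      show "?phi (x \<otimes>\<^bsub>?G\<^esub> y) = ?phi x \<otimes>\<^bsub>BijGroup E\<^esub> ?phi y"
        if "x \<in> carrier ?G" "y \<in> carrier ?G" for x y
        using that bij[of x] bij[of y]
        by (auto simp: BijGroup_def compose_def act_mul act_closed intro!: ext)
    qed
  qed
  then have "card (orbits ?G E ?phi) * order ?G = (\<Sum>g \<in> carrier ?G. card (invariants E ?phi g))"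
    by (rule group_action.burnside) (auto simp: fin_G fin_E)
  moreover have "orbits ?G E ?phi = (\<lambda>x. (\<lambda>g. act g x) ` G) ` E"
    unfolding orbits_def orbit_def by (auto simp: image_def)
  moreover have "invariants E ?phi g = {x\<in>E. act g x = x}" for g
    unfolding invariants_def by auto
  ultimately show ?thesis by (simp add: num_orbits_def order_def)
qed


section \<open>Kernels of linear forms over a finite field\<close>

text \<open>An additive map f from a finite set A onto the finite field, with a line of translations w
  realising every value, has all fibres of equal size; so its kernel has |A|/q elements.\<close>

lemma card_kernel_linear_form:
  fixes f :: "'x \<Rightarrow> 'a::{finite,field}" and add :: "'x \<Rightarrow> 'x \<Rightarrow> 'x" and w :: "'a \<Rightarrow> 'x"
  assumes fin_A: "finite A"
    and add_closed: "\<And>x y. x \<in> A \<Longrightarrow> y \<in> A \<Longrightarrow> add x y \<in> A"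
    and f_add: "\<And>x y. x \<in> A \<Longrightarrow> y \<in> A \<Longrightarrow> f (add x y) = f x + f y"
    and w_in: "\<And>t. w t \<in> A" and f_w: "\<And>t. f (w t) = t"
    and w_cancel: "\<And>x t. x \<in> A \<Longrightarrow> add (add x (w t)) (w (- t)) = x"
  shows "card {x\<in>A. f x = 0} * card (UNIV::'a set) = card A"
proof -
  have fibre: "card {x\<in>A. f x = t} = card {x\<in>A. f x = 0}" for t
  proof -
    have "bij_betw (\<lambda>x. add x (w t)) {x\<in>A. f x = 0} {x\<in>A. f x = t}"
    proof (rule bij_betw_byWitness[where f' = "\<lambda>x. add x (w (- t))"])
      show "\<forall>x\<in>{x \<in> A. f x = 0}. add (add x (w t)) (w (- t)) = x" using w_cancel by blast
      show "\<forall>x\<in>{x \<in> A. f x = t}. add (add x (w (- t))) (w t) = x"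
        using w_cancel[of _ "- t"] by simp
      show "(\<lambda>x. add x (w t)) ` {x \<in> A. f x = 0} \<subseteq> {x \<in> A. f x = t}"
        using add_closed w_in f_add f_w by auto
      show "(\<lambda>x. add x (w (- t))) ` {x \<in> A. f x = t} \<subseteq> {x \<in> A. f x = 0}"
        using add_closed w_in f_add f_w by auto
    qed
    thus ?thesis by (simp add: bij_betw_same_card)
  qed
  have "card A = (\<Sum>t\<in>UNIV. \<Sum>x\<in>{x. x \<in> A \<and> f x = t}. 1)"
    unfolding card_eq_sum by (rule sum.group[symmetric]) (simp_all add: fin_A)
  also have "\<dots> = (\<Sum>t\<in>(UNIV::'a set). card {x\<in>A. f x = 0})"
  proof (rule sum.cong[OF refl])
    fix t show "(\<Sum>x\<in>{x. x \<in> A \<and> f x = t}. 1) = card {x\<in>A. f x = 0}"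
      using fibre[of t] by simp
  qed
  finally show ?thesis by simp
qed

text \<open>Counting the zeros of a pairing beta between C and A along the rows x \<in> A: on the radical
  K the row vanishes identically, off it a fraction 1/q of its entries vanish.\<close>

lemma count_zeros_by_rows:
  fixes beta :: "'s \<Rightarrow> 'x \<Rightarrow> 'a::zero" and q :: nat
  assumes fin_A: "finite A" and K: "K \<subseteq> A"
    and generic: "\<And>x. x \<in> A \<Longrightarrow> x \<notin> K \<Longrightarrow> card {S\<in>C. beta S x = 0} * q = card C"
    and radical: "\<And>x S. x \<in> K \<Longrightarrow> S \<in> C \<Longrightarrow> beta S x = 0"
  shows "(\<Sum>x\<in>A. card {S\<in>C. beta S x = 0}) * q = card K * card C * q + (card A - card K) * card C"
proof -
  have fin_K: "finite K" using K fin_A finite_subset by blast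
  have "(\<Sum>x\<in>A. card {S\<in>C. beta S x = 0})
      = (\<Sum>x\<in>K. card {S\<in>C. beta S x = 0}) + (\<Sum>x\<in>A - K. card {S\<in>C. beta S x = 0})"
    using sum.subset_diff[OF K fin_A] by (simp add: add.commute)
  also have "(\<Sum>x\<in>K. card {S\<in>C. beta S x = 0}) = card K * card C"
  proof -
    have "(\<Sum>x\<in>K. card {S\<in>C. beta S x = 0}) = (\<Sum>x\<in>K. card C)"
      by (rule sum.cong[OF refl]) (use radical in \<open>auto intro!: arg_cong[where f=card]\<close>)
    thus ?thesis by simp
  qed
  finally have "(\<Sum>x\<in>A. card {S\<in>C. beta S x = 0}) * q
      = card K * card C * q + (\<Sum>x\<in>A - K. card {S\<in>C. beta S x = 0} * q)"
    by (simp add: sum_distrib_left algebra_simps)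
  also have "(\<Sum>x\<in>A - K. card {S\<in>C. beta S x = 0} * q) = (\<Sum>x\<in>A - K. card C)"
    using generic by simp
  also have "\<dots> = (card A - card K) * card C" using card_Diff_subset[OF fin_K K] by simp
  finally show ?thesis .
qed

lemma card_filter_as_sum: "finite A \<Longrightarrow> card {x\<in>A. P x} = (\<Sum>x\<in>A. if P x then 1 else 0)"
  by (simp add: sum.If_cases Int_def)

text \<open>Counting the zeros of beta both by rows and by columns: if off the radicals K1 \<subseteq> A and
  K2 \<subseteq> C every partial form has a kernel of relative size 1/q (q = |F| \<ge> 2), then
  |K1| |C| = |K2| |A|.\<close>

lemma double_count_radicals:
  fixes beta :: "'s \<Rightarrow> 'x \<Rightarrow> 'a::{finite,field}"
  assumes fin_A: "finite A" and fin_C: "finite C" and K1: "K1 \<subseteq> A" and K2: "K2 \<subseteq> C"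
    and row: "\<And>x. x \<in> A \<Longrightarrow> x \<notin> K1 \<Longrightarrow> card {S\<in>C. beta S x = 0} * card (UNIV::'a set) = card C"
    and row_rad: "\<And>x S. x \<in> K1 \<Longrightarrow> S \<in> C \<Longrightarrow> beta S x = 0"
    and col: "\<And>S. S \<in> C \<Longrightarrow> S \<notin> K2 \<Longrightarrow> card {x\<in>A. beta S x = 0} * card (UNIV::'a set) = card A"
    and col_rad: "\<And>x S. S \<in> K2 \<Longrightarrow> x \<in> A \<Longrightarrow> beta S x = 0"
  shows "card K1 * card C = card K2 * card A"
proof -
  let ?q = "card (UNIV::'a set)"
  define Z where "Z = (\<Sum>x\<in>A. card {S\<in>C. beta S x = 0})"
  have by_rows: "Z * ?q = card K1 * card C * ?q + (card A - card K1) * card C"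
    unfolding Z_def by (rule count_zeros_by_rows[OF fin_A K1 row row_rad])
  have Z_cols: "Z = (\<Sum>S\<in>C. card {x\<in>A. beta S x = 0})"
    unfolding Z_def card_filter_as_sum[OF fin_C] card_filter_as_sum[OF fin_A] by (rule sum.swap)
  have by_cols: "Z * ?q = card K2 * card A * ?q + (card C - card K2) * card A"
    unfolding Z_cols by (rule count_zeros_by_rows[OF fin_C K2]) (use col col_rad in auto)
  have q: "?q \<ge> 2"
    using card_mono[OF finite_UNIV, of "{0::'a, 1}"] by simp
  have split1: "(card A - card K1) * card C + card K1 * card C = card A * card C"
    using card_mono[OF fin_A K1] by (metis add_mult_distrib le_add_diff_inverse2)
  have split2: "(card C - card K2) * card A + card K2 * card A = card C * card A"
    using card_mono[OF fin_C K2] by (metis add_mult_distrib le_add_diff_inverse2)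
  have "card K1 * card C * ?q + card A * card C = Z * ?q + card K1 * card C"
    using by_rows split1 by simp
  moreover have "card K2 * card A * ?q + card A * card C = Z * ?q + card K2 * card A"
    using by_cols split2 by (simp add: mult.commute)
  ultimately have "card K1 * card C * ?q + card K2 * card A = card K2 * card A * ?q + card K1 * card C"
    by linarith
  hence "card K1 * card C * (?q - 1) = card K2 * card A * (?q - 1)"
    using q by (simp add: diff_mult_distrib2)
  moreover have "?q - 1 \<noteq> 0" using q by simp
  ultimately show ?thesis using mult_right_cancel by blast
qed


section \<open>The trace pairing and the kernel duality\<close>

definition trace_form :: "'a::comm_ring_1 mat \<Rightarrow> 'a mat \<Rightarrow> 'a" where
  "trace_form S V = (\<Sum>i<dim_row S. \<Sum>j<dim_col S. S $$ (i,j) * V $$ (j,i))"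

lemma trace_form_swap:
  assumes "S \<in> carrier_mat r c" "V \<in> carrier_mat c r"
  shows "trace_form S V = trace_form V S"
  using assms unfolding trace_form_def by (simp add: sum.swap[of _ "{..<r}"] mult.commute)

lemma trace_form_add_left:
  assumes "S1 \<in> carrier_mat r c" "S2 \<in> carrier_mat r c"
  shows "trace_form (S1 + S2) V = trace_form S1 V + trace_form S2 V"
  using assms unfolding trace_form_def by (simp add: distrib_right sum.distrib)

lemma trace_form_add_right:
  assumes "S \<in> carrier_mat r c" "V1 \<in> carrier_mat c r" "V2 \<in> carrier_mat c r"
  shows "trace_form S (V1 + V2) = trace_form S V1 + trace_form S V2"
  using assms unfolding trace_form_def by (simp add: distrib_left sum.distrib)

lemma trace_form_diff_left:
  assumes "S1 \<in> carrier_mat r c" "S2 \<in> carrier_mat r c"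
  shows "trace_form (S1 - S2) V = trace_form S1 V - trace_form S2 V"
  using assms unfolding trace_form_def by (simp add: left_diff_distrib sum_subtractf)

lemma trace_form_diff_right:
  assumes "S \<in> carrier_mat r c" "V1 \<in> carrier_mat c r" "V2 \<in> carrier_mat c r"
  shows "trace_form S (V1 - V2) = trace_form S V1 - trace_form S V2"
  using assms unfolding trace_form_def by (simp add: right_diff_distrib sum_subtractf)

lemma trace_form_smult_left:
  assumes "S \<in> carrier_mat r c"
  shows "trace_form (k \<cdot>\<^sub>m S) V = k * trace_form S V"
  using assms unfolding trace_form_def by (simp add: sum_distrib_left ac_simps)

lemma trace_form_smult_right:
  assumes "S \<in> carrier_mat r c" "V \<in> carrier_mat c r"
  shows "trace_form S (k \<cdot>\<^sub>m V) = k * trace_form S V"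
  using assms unfolding trace_form_def by (simp add: sum_distrib_left ac_simps)

lemma trace_form_zero_left: "trace_form (0\<^sub>m r c) V = 0"
  unfolding trace_form_def by simp

lemma trace_form_zero_right:
  assumes "S \<in> carrier_mat r c"
  shows "trace_form S (0\<^sub>m c r) = 0"
  using assms unfolding trace_form_def by simp

lemma trace_form_mult:
  assumes S: "S \<in> carrier_mat r c" and A: "A \<in> carrier_mat c d" and V: "V \<in> carrier_mat d r"
  shows "trace_form S (A * V) = trace_form (S * A) V"
proof -
  have "trace_form S (A * V) = (\<Sum>i<r. \<Sum>j<c. \<Sum>k<d. S $$ (i,j) * (A $$ (j,k) * V $$ (k,i)))"
    using assms unfolding trace_form_def
    by (simp add: scalar_prod_def sum_distrib_left atLeast0LessThan)
  also have "\<dots> = (\<Sum>i<r. \<Sum>k<d. \<Sum>j<c. S $$ (i,j) * A $$ (j,k) * V $$ (k,i))"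
    by (rule sum.cong[OF refl], subst sum.swap) (simp add: mult.assoc)
  also have "\<dots> = trace_form (S * A) V"
    using assms unfolding trace_form_def
    by (simp add: scalar_prod_def sum_distrib_right atLeast0LessThan)
  finally show ?thesis .
qed

text \<open>Over a field the pairing is nondegenerate: a nonzero S pairs to 1 with a suitable matrix unit.\<close>

lemma trace_form_nondegenerate:
  fixes S :: "'a::field mat"
  assumes S: "S \<in> carrier_mat r c" "S \<noteq> 0\<^sub>m r c"
  shows "\<exists>V\<in>carrier_mat c r. trace_form S V = 1"
proof -
  obtain i j where ij: "i < r" "j < c" "S $$ (i,j) \<noteq> 0"
    using S by (metis carrier_matD eq_matI index_zero_mat)
  define V where "V = mat c r (\<lambda>(k,l). if k = j \<and> l = i then 1 / S $$ (i,j) else 0)"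
  have "trace_form S V = (\<Sum>i'<r. \<Sum>j'<c. if i' = i \<and> j' = j then 1 else 0)"
    using S ij unfolding trace_form_def V_def
    by (intro sum.cong refl) (auto simp: field_simps)
  also have "\<dots> = (\<Sum>i'<r. if i' = i then (\<Sum>j'<c. if j' = j then 1 else 0) else 0)"
    by (rule sum.cong) auto
  also have "\<dots> = 1" using ij by simp
  finally show ?thesis by (intro bexI[of _ V]) (auto simp: V_def)
qed

lemma mat_diff_zero:
  fixes A :: "'a::ab_group_add mat"
  assumes "A \<in> carrier_mat r c" "B \<in> carrier_mat r c" "A - B = 0\<^sub>m r c"
  shows "A = B"
proof (rule eq_matI)
  fix i j assume ij: "i < dim_row B" "j < dim_col B"
  hence "(A - B) $$ (i,j) = 0" using assms by simp
  moreover have "(A - B) $$ (i,j) = A $$ (i,j) - B $$ (i,j)" using ij by simp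
  ultimately show "A $$ (i,j) = B $$ (i,j)" by simp
qed (use assms in auto)

lemma smult_cancel_mat:
  fixes S :: "'a::field mat"
  assumes "S \<in> carrier_mat r c" "E \<in> carrier_mat r c"
  shows "S + k \<cdot>\<^sub>m E + (- k) \<cdot>\<^sub>m E = S"
  using assms by (intro eq_matI) (auto simp: algebra_simps)

lemma finite_carrier_mat: "finite (carrier_mat n m :: 'a::finite mat set)"
proof -
  have "carrier_mat n m \<subseteq> (\<lambda>f. mat n m f) ` (PiE ({..<n} \<times> {..<m}) (\<lambda>_. (UNIV :: 'a set)))"
  proof
    fix A :: "'a mat" assume A: "A \<in> carrier_mat n m"
    show "A \<in> (\<lambda>f. mat n m f) ` (PiE ({..<n} \<times> {..<m}) (\<lambda>_. (UNIV :: 'a set)))"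
      by (rule image_eqI[of _ _ "restrict (\<lambda>ij. A $$ ij) ({..<n}\<times>{..<m})"])
        (use A in \<open>auto intro!: eq_matI\<close>)
  qed
  thus ?thesis by (rule finite_subset) (intro finite_imageI finite_PiE; simp)
qed

lemma card_carrier_mat_transpose:
  "card (carrier_mat n m :: 'a mat set) = card (carrier_mat m n :: 'a mat set)"
  by (rule bij_betw_same_card[of transpose_mat], rule bij_betw_byWitness[where f' = transpose_mat]) auto

lemma card_carrier_mat_pos: "card (carrier_mat n m :: 'a::finite mat set) > 0"
  using finite_carrier_mat[of n m] zero_carrier_mat[of n m] card_gt_0_iff by blast

lemma card_trace_form_kernel:
  fixes V :: "'a::{finite,field} mat"
  assumes V: "V \<in> carrier_mat c r" and V0: "V \<noteq> 0\<^sub>m c r"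
  shows "card {S \<in> carrier_mat r c. trace_form S V = 0} * card (UNIV::'a set) = card (carrier_mat r c :: 'a mat set)"
proof -
  obtain E where E: "E \<in> carrier_mat r c" "trace_form V E = 1"
    using trace_form_nondegenerate[OF V V0] by blast
  have E1: "trace_form E V = 1" using E trace_form_swap[OF V E(1)] by simp
  show ?thesis
  proof (rule card_kernel_linear_form[where add = "(+)" and w = "\<lambda>t. t \<cdot>\<^sub>m E"])
    show "\<And>S T. S \<in> carrier_mat r c \<Longrightarrow> T \<in> carrier_mat r c \<Longrightarrow>
      trace_form (S + T) V = trace_form S V + trace_form T V"
      by (rule trace_form_add_left)
    show "\<And>t. trace_form (t \<cdot>\<^sub>m E) V = t" using E E1 by (simp add: trace_form_smult_left)
    show "\<And>S t. S \<in> carrier_mat r c \<Longrightarrow> S + t \<cdot>\<^sub>m E + (- t) \<cdot>\<^sub>m E = S"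
      using E(1) smult_cancel_mat by blast
  qed (use E finite_carrier_mat in auto)
qed

lemma card_trace_form_pair_kernel:
  fixes U1 U2 :: "'a::{finite,field} mat"
  assumes U: "U1 \<in> carrier_mat r c" "U2 \<in> carrier_mat r c" and nz: "U1 \<noteq> 0\<^sub>m r c \<or> U2 \<noteq> 0\<^sub>m r c"
  shows "card {x \<in> carrier_mat c r \<times> carrier_mat c r. trace_form U1 (fst x) + trace_form U2 (snd x) = 0}
      * card (UNIV::'a set) = card (carrier_mat c r \<times> carrier_mat c r :: ('a mat \<times> 'a mat) set)"
proof -
  let ?M = "carrier_mat c r :: 'a mat set"
  have "\<exists>E1\<in>?M. \<exists>E2\<in>?M. trace_form U1 E1 + trace_form U2 E2 = 1"
  proof (cases "U1 = 0\<^sub>m r c")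
    case False
    then obtain E where "E \<in> ?M" "trace_form U1 E = 1" using trace_form_nondegenerate[OF U(1)] by blast
    thus ?thesis using U by (intro bexI[of _ E] bexI[of _ "0\<^sub>m c r"]) (auto simp: trace_form_zero_right)
  next
    case True
    then obtain E where "E \<in> ?M" "trace_form U2 E = 1" using nz trace_form_nondegenerate[OF U(2)] by blast
    thus ?thesis using U by (intro bexI[of _ E] bexI[of _ "0\<^sub>m c r"]) (auto simp: trace_form_zero_right)
  qed
  then obtain E1 E2 where E: "E1 \<in> ?M" "E2 \<in> ?M" "trace_form U1 E1 + trace_form U2 E2 = 1" by blast
  show ?thesis
  proof (rule card_kernel_linear_form[where add = "\<lambda>x y. (fst x + fst y, snd x + snd y)"
        and w = "\<lambda>t. (t \<cdot>\<^sub>m E1, t \<cdot>\<^sub>m E2)"])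
    show "finite (?M \<times> ?M)" by (simp add: finite_carrier_mat)
    show "\<And>x y. x \<in> ?M \<times> ?M \<Longrightarrow> y \<in> ?M \<times> ?M \<Longrightarrow>
      trace_form U1 (fst (fst x + fst y, snd x + snd y)) + trace_form U2 (snd (fst x + fst y, snd x + snd y))
      = trace_form U1 (fst x) + trace_form U2 (snd x) + (trace_form U1 (fst y) + trace_form U2 (snd y))"
      using U by (auto simp: trace_form_add_right[of _ r c])
    show "\<And>t. trace_form U1 (fst (t \<cdot>\<^sub>m E1, t \<cdot>\<^sub>m E2)) + trace_form U2 (snd (t \<cdot>\<^sub>m E1, t \<cdot>\<^sub>m E2)) = t"
      using U E by (simp add: trace_form_smult_right[of _ r c] flip: distrib_left)
    show "\<And>x t. x \<in> ?M \<times> ?M \<Longrightarrow>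
      (fst (fst x + fst (t \<cdot>\<^sub>m E1, t \<cdot>\<^sub>m E2), snd x + snd (t \<cdot>\<^sub>m E1, t \<cdot>\<^sub>m E2)) + fst ((- t) \<cdot>\<^sub>m E1, (- t) \<cdot>\<^sub>m E2),
       snd (fst x + fst (t \<cdot>\<^sub>m E1, t \<cdot>\<^sub>m E2), snd x + snd (t \<cdot>\<^sub>m E1, t \<cdot>\<^sub>m E2)) + snd ((- t) \<cdot>\<^sub>m E1, (- t) \<cdot>\<^sub>m E2)) = x"
      using E smult_cancel_mat by (auto simp: mem_Times_iff)
  qed (use E in auto)
qed

text \<open>For g' = [[ga, M], [0, gb]] and Y = [[Xa, T], [0, Xb]] the corner of g' Y - Y g' is
  L (T, M) = ga T + M Xb - (Xa M + T gb); g' and Y commute iff (T, M) lies in the kernel of L.\<close>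

definition commutator_corner :: "'a::comm_ring_1 mat \<Rightarrow> 'a mat \<Rightarrow> 'a mat \<Rightarrow> 'a mat \<Rightarrow> 'a mat \<times> 'a mat \<Rightarrow> 'a mat" where
  "commutator_corner ga Xa gb Xb x = ga * fst x + snd x * Xb - (Xa * snd x + fst x * gb)"

context
  fixes ga Xa gb Xb :: "'a::field mat" and na nb :: nat
  assumes ga: "ga \<in> carrier_mat na na" and Xa: "Xa \<in> carrier_mat na na"
    and gb: "gb \<in> carrier_mat nb nb" and Xb: "Xb \<in> carrier_mat nb nb"
begin

lemma commutator_corner_carrier:
  "x \<in> carrier_mat na nb \<times> carrier_mat na nb \<Longrightarrow> commutator_corner ga Xa gb Xb x \<in> carrier_mat na nb"
  unfolding commutator_corner_def using ga Xa gb Xb by auto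

lemma commutator_corner_eq_zero_iff:
  assumes x: "x \<in> carrier_mat na nb \<times> carrier_mat na nb"
  shows "commutator_corner ga Xa gb Xb x = 0\<^sub>m na nb \<longleftrightarrow> ga * fst x + snd x * Xb = Xa * snd x + fst x * gb"
proof -
  have c: "ga * fst x + snd x * Xb \<in> carrier_mat na nb" "Xa * snd x + fst x * gb \<in> carrier_mat na nb"
    using x ga Xa gb Xb by auto
  show ?thesis unfolding commutator_corner_def
  proof
    assume "ga * fst x + snd x * Xb - (Xa * snd x + fst x * gb) = 0\<^sub>m na nb"
    thus "ga * fst x + snd x * Xb = Xa * snd x + fst x * gb" by (rule mat_diff_zero[OF c])
  next
    assume eq: "ga * fst x + snd x * Xb = Xa * snd x + fst x * gb"
    show "ga * fst x + snd x * Xb - (Xa * snd x + fst x * gb) = 0\<^sub>m na nb" unfolding eq using c(2) by simp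
  qed
qed

text \<open>The adjoint of L under the trace pairing is L* S = (S ga - gb S, Xb S - S Xa).\<close>

lemma trace_form_commutator_corner:
  assumes S: "S \<in> carrier_mat nb na" and x: "x \<in> carrier_mat na nb \<times> carrier_mat na nb"
  shows "trace_form S (commutator_corner ga Xa gb Xb x)
       = trace_form (S * ga - gb * S) (fst x) + trace_form (Xb * S - S * Xa) (snd x)"
proof -
  obtain T M where x_TM: "x = (T, M)" and T: "T \<in> carrier_mat na nb" and M: "M \<in> carrier_mat na nb"
    using x by auto
  have c: "ga * T \<in> carrier_mat na nb" "M * Xb \<in> carrier_mat na nb" "Xa * M \<in> carrier_mat na nb"
     "T * gb \<in> carrier_mat na nb" "S * ga \<in> carrier_mat nb na" "gb * S \<in> carrier_mat nb na"
     "Xb * S \<in> carrier_mat nb na" "S * Xa \<in> carrier_mat nb na" using S T M ga Xa gb Xb by auto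
  have e1: "trace_form S (ga * T) = trace_form (S * ga) T" by (rule trace_form_mult[OF S ga T])
  have e2: "trace_form S (M * Xb) = trace_form (Xb * S) M"
    using trace_form_swap[OF S c(2)] trace_form_mult[OF M Xb S] trace_form_swap[OF M c(7)] by simp
  have e3: "trace_form S (Xa * M) = trace_form (S * Xa) M" by (rule trace_form_mult[OF S Xa M])
  have e4: "trace_form S (T * gb) = trace_form (gb * S) T"
    using trace_form_swap[OF S c(4)] trace_form_mult[OF T gb S] trace_form_swap[OF T c(6)] by simp
  have "trace_form S (ga * T + M * Xb - (Xa * M + T * gb))
      = trace_form S (ga * T) + trace_form S (M * Xb) - (trace_form S (Xa * M) + trace_form S (T * gb))"
    using c S by (simp add: trace_form_diff_right[of _ nb na] trace_form_add_right[of _ nb na])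
  also have "\<dots> = trace_form (S * ga - gb * S) T + trace_form (Xb * S - S * Xa) M"
    using c by (simp add: e1 e2 e3 e4 trace_form_diff_left[of _ nb na])
  finally show ?thesis unfolding commutator_corner_def x_TM by simp
qed

end

text \<open>This replaces the rank argument
  |ker L| = q^(2 dim - rank L), |ker L*| = q^(dim - rank L) by double counting the zeros of
  (S, x) \<mapsto> tr (S (L x)) = tr ((L* S) x).\<close>

lemma kernel_adjoint_duality:
  fixes ga Xa :: "'a::{finite,field} mat"
  assumes ga: "ga \<in> carrier_mat na na" and Xa: "Xa \<in> carrier_mat na na"
    and gb: "gb \<in> carrier_mat nb nb" and Xb: "Xb \<in> carrier_mat nb nb"
  shows "card {(T,M). T \<in> carrier_mat na nb \<and> M \<in> carrier_mat na nb \<and> ga * T + M * Xb = Xa * M + T * gb}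
    = card {S \<in> carrier_mat nb na. S * ga = gb * S \<and> Xb * S = S * Xa} * card (carrier_mat na nb :: 'a mat set)"
proof -
  let ?Mab = "carrier_mat na nb :: 'a mat set"
  let ?Mba = "carrier_mat nb na :: 'a mat set"
  let ?K = "{(T,M). T \<in> ?Mab \<and> M \<in> ?Mab \<and> ga * T + M * Xb = Xa * M + T * gb}"
  let ?K' = "{S \<in> ?Mba. S * ga = gb * S \<and> Xb * S = S * Xa}"
  let ?L = "commutator_corner ga Xa gb Xb"
  have double_count: "card ?K * card ?Mba = card ?K' * card (?Mab \<times> ?Mab)"
  proof (rule double_count_radicals[where beta = "\<lambda>S x. trace_form S (?L x)"])
    show "finite (?Mab \<times> ?Mab)" "finite ?Mba" by (simp_all add: finite_carrier_mat)
    show "?K \<subseteq> ?Mab \<times> ?Mab" "?K' \<subseteq> ?Mba" by auto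
  next
    fix x assume x: "x \<in> ?Mab \<times> ?Mab" "x \<notin> ?K"
    then have "?L x \<noteq> 0\<^sub>m na nb" using commutator_corner_eq_zero_iff[OF assms x(1)] by auto
    thus "card {S \<in> ?Mba. trace_form S (?L x) = 0} * card (UNIV::'a set) = card ?Mba"
      by (rule card_trace_form_kernel[OF commutator_corner_carrier[OF assms x(1)]])
  next
    fix x S assume x: "x \<in> ?K" and S: "S \<in> ?Mba"
    then have "x \<in> ?Mab \<times> ?Mab" "ga * fst x + snd x * Xb = Xa * snd x + fst x * gb" by auto
    then have "?L x = 0\<^sub>m na nb" using commutator_corner_eq_zero_iff[OF assms] by blast
    thus "trace_form S (?L x) = 0" using S by (simp add: trace_form_zero_right)
  next
    fix S assume S: "S \<in> ?Mba" "S \<notin> ?K'"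
    have U: "S * ga - gb * S \<in> ?Mba" "Xb * S - S * Xa \<in> ?Mba" using S ga Xa gb Xb by auto
    have "S * ga - gb * S \<noteq> 0\<^sub>m nb na \<or> Xb * S - S * Xa \<noteq> 0\<^sub>m nb na"
    proof (rule ccontr)
      assume zero: "\<not> ?thesis"
      have "S * ga = gb * S" by (rule mat_diff_zero[of _ nb na]) (use zero S ga gb in auto)
      moreover have "Xb * S = S * Xa" by (rule mat_diff_zero[of _ nb na]) (use zero S Xa Xb in auto)
      ultimately show False using S by auto
    qed
    note pair_kernel = card_trace_form_pair_kernel[OF U this]
    have "{x \<in> ?Mab \<times> ?Mab. trace_form S (?L x) = 0} = {x \<in> ?Mab \<times> ?Mab.
        trace_form (S * ga - gb * S) (fst x) + trace_form (Xb * S - S * Xa) (snd x) = 0}"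
      using trace_form_commutator_corner[OF assms S(1)] by auto
    thus "card {x \<in> ?Mab \<times> ?Mab. trace_form S (?L x) = 0} * card (UNIV::'a set) = card (?Mab \<times> ?Mab)"
      using pair_kernel by simp
  next
    fix x S assume S: "S \<in> ?K'" and x: "x \<in> ?Mab \<times> ?Mab"
    then have eqs: "S * ga = gb * S" "Xb * S = S * Xa" and "gb * S \<in> ?Mba" "S * Xa \<in> ?Mba"
      using gb Xa by auto
    then have "S * ga - gb * S = 0\<^sub>m nb na" "Xb * S - S * Xa = 0\<^sub>m nb na"
      unfolding eqs by simp_all
    thus "trace_form S (?L x) = 0"
      using trace_form_commutator_corner[OF assms, of S x] S x by (simp add: trace_form_zero_left)
  qed
  have "card ?K * card ?Mab = card ?K' * card ?Mab * card ?Mab"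
    using double_count unfolding card_carrier_mat_transpose[of nb na] card_cartesian_product
    by (simp add: mult.assoc)
  thus ?thesis using card_carrier_mat_pos[of na nb, where 'a = 'a] by simp
qed


section \<open>Split short exact sequences and block matrices\<close>

text \<open>Ring identities for matrices with dimension side conditions stated on dim_row/dim_col, so that
  the simplifier can discharge them from carrier facts; they are used throughout.\<close>

lemma mat_mult_assoc_dims:
  "dim_col A = dim_row B \<Longrightarrow> dim_col B = dim_row C \<Longrightarrow> A * B * C = A * (B * (C::'a::semiring_1 mat))"
  by (rule assoc_mult_mat[of A "dim_row A" "dim_col A" B "dim_col B" C "dim_col C"]) auto

lemma mat_mult_add_distrib_dims:
  "dim_col A = dim_row B \<Longrightarrow> dim_row B = dim_row C \<Longrightarrow> dim_col B = dim_col C \<Longrightarrow>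
   A * (B + C) = A * B + A * (C::'a::semiring_1 mat)"
  by (rule mult_add_distrib_mat[of A "dim_row A" "dim_col A" B "dim_col B"]) auto

lemma mat_add_mult_distrib_dims:
  "dim_col A = dim_row C \<Longrightarrow> dim_row A = dim_row B \<Longrightarrow> dim_col A = dim_col B \<Longrightarrow>
   (A + B) * C = A * C + B * (C::'a::semiring_1 mat)"
  by (rule add_mult_distrib_mat[of A "dim_row A" "dim_col A" B C "dim_col C"]) auto

lemma mat_add_zero_dims:
  "dim_row A = r \<Longrightarrow> dim_col A = c \<Longrightarrow> A + 0\<^sub>m r c = (A::'a::monoid_add mat)"
  "dim_row A = r \<Longrightarrow> dim_col A = c \<Longrightarrow> 0\<^sub>m r c + A = (A::'a::monoid_add mat)"
  by (intro eq_matI; auto)+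

lemma mat_add_assoc_dims:
  "dim_row A = dim_row B \<Longrightarrow> dim_col A = dim_col B \<Longrightarrow> dim_row B = dim_row C \<Longrightarrow>
   dim_col B = dim_col C \<Longrightarrow> A + B + C = A + (B + (C::'a::semigroup_add mat))"
  by (intro eq_matI) (auto simp: add.assoc)

lemmas mat_ring_simps = mat_mult_assoc_dims mat_mult_add_distrib_dims mat_add_mult_distrib_dims
  mat_add_zero_dims mat_add_assoc_dims

text \<open>A matrix Z on F^n "induces" A on F^na and B on F^nb if it is compatible with
  i and p; such a Z is the block matrix [[A, W], [0, B]] with corner W = R Z s.\<close>

locale split_ses =
  fixes na nb n :: nat and i p s R :: "'a::field mat"
  assumes i: "i \<in> carrier_mat n na" and p: "p \<in> carrier_mat nb n"
    and s: "s \<in> carrier_mat n nb" and R: "R \<in> carrier_mat na n"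
    and R_i: "R * i = 1\<^sub>m na" and R_s: "R * s = 0\<^sub>m na nb"
    and p_i: "p * i = 0\<^sub>m nb na" and p_s: "p * s = 1\<^sub>m nb"
    and split: "i * R + s * p = 1\<^sub>m n"
begin

lemmas dims[simp] = carrier_matD[OF i] carrier_matD[OF p] carrier_matD[OF s] carrier_matD[OF R]

lemma split_relations_assoc[simp]:
  "dim_row X = na \<Longrightarrow> R * (i * X) = X" "dim_row X = nb \<Longrightarrow> R * (s * X) = 0\<^sub>m na (dim_col X)"
  "dim_row X = na \<Longrightarrow> p * (i * X) = 0\<^sub>m nb (dim_col X)" "dim_row X = nb \<Longrightarrow> p * (s * X) = X"
  by (subst mat_mult_assoc_dims[symmetric]; simp add: R_i R_s p_i p_s)+

lemmas split_relations[simp] = R_i R_s p_i p_s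

definition induces :: "'a mat \<Rightarrow> 'a mat \<Rightarrow> 'a mat \<Rightarrow> bool" where
  "induces A B Z \<longleftrightarrow> Z \<in> carrier_mat n n \<and> Z * i = i * A \<and> p * Z = B * p"

definition block :: "'a mat \<Rightarrow> 'a mat \<Rightarrow> 'a mat \<Rightarrow> 'a mat" where
  "block A W B = i * A * R + i * W * p + s * B * p"

context
  fixes A W B :: "'a mat"
  assumes A: "A \<in> carrier_mat na na" and W: "W \<in> carrier_mat na nb" and B: "B \<in> carrier_mat nb nb"
begin

lemma block_carrier: "block A W B \<in> carrier_mat n n"
  unfolding block_def using A W B by (metis add_carrier_mat mult_carrier_mat i p s R)

lemma block_mult_s: "block A W B * s = i * W + s * B"
  unfolding block_def using A W B by (simp add: mat_ring_simps)

lemma R_mult_block: "R * block A W B = A * R + W * p"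
  unfolding block_def using A W B by (simp add: mat_ring_simps)

lemma corner_block: "R * block A W B * s = W"
  using A W B block_carrier by (simp add: R_mult_block mat_ring_simps)

lemma induces_block: "induces A B (block A W B)"
  unfolding induces_def block_def using A W B block_carrier[unfolded block_def]
  by (simp add: mat_ring_simps)

end

lemma induces_eq_block:
  assumes A: "A \<in> carrier_mat na na" and B: "B \<in> carrier_mat nb nb" and Z: "induces A B Z"
  shows "Z = block A (R * Z * s) B"
proof -
  have Zc: "Z \<in> carrier_mat n n" and Zi: "Z * i = i * A" and pZ: "p * Z = B * p"
    using Z unfolding induces_def by auto
  have Zi': "Z * (i * Y) = i * (A * Y)" if "dim_row Y = na" for Y
    using Zi Zc A that by (metis mat_mult_assoc_dims carrier_matD dims)
  have pZ': "p * (Z * Y) = B * (p * Y)" if "dim_row Y = n" for Y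
    using pZ Zc B that by (metis mat_mult_assoc_dims carrier_matD dims)
  have "block A (R * Z * s) B = (i * R + s * p) * (Z * (i * R + s * p))"
    using Zc A B by (simp add: block_def mat_ring_simps Zi' pZ')
  also have "\<dots> = Z" using Zc by (simp add: split)
  finally show ?thesis by simp
qed

lemma induces_mult:
  assumes "induces A1 B1 Z1" "induces A2 B2 Z2"
    and "A1 \<in> carrier_mat na na" "B1 \<in> carrier_mat nb nb" "A2 \<in> carrier_mat na na" "B2 \<in> carrier_mat nb nb"
  shows "induces (A1 * A2) (B1 * B2) (Z1 * Z2)"
proof -
  have c: "Z1 \<in> carrier_mat n n" "Z2 \<in> carrier_mat n n" and e: "Z1 * i = i * A1" "p * Z1 = B1 * p"
     "Z2 * i = i * A2" "p * Z2 = B2 * p" using assms unfolding induces_def by auto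
  have "Z1 * Z2 * i = Z1 * (Z2 * i)" using c by (simp add: mat_mult_assoc_dims)
  also have "\<dots> = Z1 * (i * A2)" by (simp only: e)
  also have "\<dots> = (Z1 * i) * A2" using c assms by (simp add: mat_mult_assoc_dims)
  also have "\<dots> = (i * A1) * A2" by (simp only: e)
  also have "\<dots> = i * (A1 * A2)" using c assms by (simp add: mat_mult_assoc_dims)
  finally have 1: "Z1 * Z2 * i = i * (A1 * A2)" .
  have "p * (Z1 * Z2) = (p * Z1) * Z2" using c by (simp add: mat_mult_assoc_dims)
  also have "\<dots> = (B1 * p) * Z2" by (simp only: e)
  also have "\<dots> = B1 * (p * Z2)" using c assms by (simp add: mat_mult_assoc_dims)
  also have "\<dots> = B1 * (B2 * p)" by (simp only: e)
  also have "\<dots> = B1 * B2 * p" using c assms by (simp add: mat_mult_assoc_dims)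
  finally have 2: "p * (Z1 * Z2) = B1 * B2 * p" .
  show ?thesis unfolding induces_def using 1 2 c by auto
qed

lemma corner_mult:
  assumes "induces A1 B1 Z1" "induces A2 B2 Z2"
    and A1: "A1 \<in> carrier_mat na na" and B1: "B1 \<in> carrier_mat nb nb"
    and A2: "A2 \<in> carrier_mat na na" and B2: "B2 \<in> carrier_mat nb nb"
  shows "R * (Z1 * Z2) * s = A1 * (R * Z2 * s) + (R * Z1 * s) * B2"
proof -
  have c: "Z1 \<in> carrier_mat n n" "Z2 \<in> carrier_mat n n" using assms unfolding induces_def by auto
  define W1 where "W1 = R * Z1 * s"
  define W2 where "W2 = R * Z2 * s"
  have W: "W1 \<in> carrier_mat na nb" "W2 \<in> carrier_mat na nb" unfolding W1_def W2_def using c by auto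
  have Z1: "Z1 = block A1 W1 B1" unfolding W1_def by (rule induces_eq_block[OF A1 B1 assms(1)])
  have Z2: "Z2 = block A2 W2 B2" unfolding W2_def by (rule induces_eq_block[OF A2 B2 assms(2)])
  have "R * (Z1 * Z2) * s = (R * Z1) * (Z2 * s)" using c by (simp add: mat_mult_assoc_dims)
  also have "\<dots> = (A1 * R + W1 * p) * (i * W2 + s * B2)"
    unfolding Z1 Z2 using A1 B1 A2 B2 W by (simp only: R_mult_block block_mult_s)
  also have "\<dots> = A1 * W2 + W1 * B2" using A1 B1 A2 B2 W by (simp add: mat_ring_simps)
  finally show ?thesis unfolding W1_def W2_def .
qed

lemma block_one: "block (1\<^sub>m na) (0\<^sub>m na nb) (1\<^sub>m nb) = 1\<^sub>m n"
  unfolding block_def by (simp add: mat_ring_simps split)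

lemma induces_one_eq:
  assumes "induces (1\<^sub>m na) (1\<^sub>m nb) Z" "R * Z * s = 0\<^sub>m na nb"
  shows "Z = 1\<^sub>m n"
  using induces_eq_block[OF one_carrier_mat one_carrier_mat assms(1)] assms(2) block_one by simp

lemma block_inverse:
  assumes A: "A \<in> carrier_mat na na" and A': "A' \<in> carrier_mat na na"
    and B: "B \<in> carrier_mat nb nb" and B': "B' \<in> carrier_mat nb nb" and W: "W \<in> carrier_mat na nb"
    and AA': "A * A' = 1\<^sub>m na" "A' * A = 1\<^sub>m na" and BB': "B * B' = 1\<^sub>m nb" "B' * B = 1\<^sub>m nb"
  shows "block A W B * block A' (- (A' * W * B')) B' = 1\<^sub>m n"
    and "block A' (- (A' * W * B')) B' * block A W B = 1\<^sub>m n"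
proof -
  define W' where "W' = - (A' * W * B')"
  have W': "W' \<in> carrier_mat na nb" unfolding W'_def using A' B' W by auto
  note ind = induces_block[OF A W B] induces_block[OF A' W' B']
  note corner = corner_block[OF A W B] corner_block[OF A' W' B']
  have "A * W' = - (W * B')"
  proof -
    have "A * W' = - ((A * A') * (W * B'))"
      unfolding W'_def using A A' B' W by (simp add: mat_mult_assoc_dims)
    thus ?thesis using AA' W B' by simp
  qed
  then have "R * (block A W B * block A' W' B') * s = 0\<^sub>m na nb"
    using corner_mult[OF ind A B A' B'] corner W B' by simp
  then show "block A W B * block A' W' B' = 1\<^sub>m n"
    using induces_one_eq induces_mult[OF ind A B A' B'] AA' BB' by simp
  have "W' * B = - (A' * W)"
  proof -
    have "W' * B = - ((A' * W) * (B' * B))"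
      unfolding W'_def using A' B B' W by (simp add: mat_mult_assoc_dims)
    thus ?thesis using BB' A' W by simp
  qed
  moreover have "A' * W + - (A' * W) = 0\<^sub>m na nb"
    using A' W by (intro eq_matI) auto
  ultimately have "R * (block A' W' B' * block A W B) * s = 0\<^sub>m na nb"
    using corner_mult[OF ind(2,1) A' B' A B] corner by simp
  then show "block A' W' B' * block A W B = 1\<^sub>m n"
    using induces_one_eq induces_mult[OF ind(2,1) A' B' A B] AA' BB' by simp
qed

end

text \<open>Existence of a splitting.  Everything is phrased with matrices acting on column vectors, in
  the form the exactness data of Omega(Q,a,b) is given.\<close>

lemma col_as_mult_vec:
  fixes A :: "'a::semiring_1 mat"
  assumes A: "A \<in> carrier_mat r c" and j: "j < c"
  shows "col A j = A *\<^sub>v unit_vec c j"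
  using col_mult2[OF A one_carrier_mat j] right_mult_one_mat[OF A] A j by simp

lemma vec_diff_zero:
  fixes a :: "'a::ab_group_add vec"
  assumes "a \<in> carrier_vec m" "b \<in> carrier_vec m" "a - b = 0\<^sub>v m"
  shows "a = b"
proof (rule eq_vecI)
  fix k assume k: "k < dim_vec b"
  have "(a - b) $ k = 0" using assms k by simp
  moreover have "(a - b) $ k = a $ k - b $ k" using k by simp
  ultimately show "a $ k = b $ k" by simp
qed (use assms in auto)

lemma mat_add_cancel_right:
  fixes X :: "'a::ab_group_add mat"
  assumes "X \<in> carrier_mat r c" "Y \<in> carrier_mat r c" "X + Y = Y"
  shows "X = 0\<^sub>m r c"
proof (rule eq_matI)
  fix k l assume kl: "k < dim_row (0\<^sub>m r c :: 'a mat)" "l < dim_col (0\<^sub>m r c :: 'a mat)"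
  have "(X + Y) $$ (k,l) = Y $$ (k,l)" by (simp only: assms(3))
  moreover have "(X + Y) $$ (k,l) = X $$ (k,l) + Y $$ (k,l)" using kl assms(1,2) by simp
  ultimately show "X $$ (k,l) = 0\<^sub>m r c $$ (k,l)" using kl by simp
qed (use assms in auto)

lemma mat_injective_cancel:
  fixes i :: "'a::field mat"
  assumes i: "i \<in> carrier_mat n na"
    and inj: "\<forall>u\<in>carrier_vec na. i *\<^sub>v u = 0\<^sub>v n \<longrightarrow> u = 0\<^sub>v na"
    and X: "X \<in> carrier_mat na m" and Y: "Y \<in> carrier_mat na m" and eq: "i * X = i * Y"
  shows "X = Y"
proof (rule mat_col_eqI)
  fix j assume "j < dim_col Y"
  hence j: "j < m" using Y by simp
  have cX: "col X j \<in> carrier_vec na" and cY: "col Y j \<in> carrier_vec na" using X Y j by auto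
  have same: "i *\<^sub>v col X j = i *\<^sub>v col Y j"
    using col_mult2[OF i X j] col_mult2[OF i Y j] eq by simp
  have "i *\<^sub>v (col X j - col Y j) = i *\<^sub>v col X j - i *\<^sub>v col Y j"
    by (rule mult_minus_distrib_mat_vec[OF i cX cY])
  also have "\<dots> = 0\<^sub>v n" unfolding same by (intro eq_vecI) (use i cY in simp_all)
  finally have "i *\<^sub>v (col X j - col Y j) = 0\<^sub>v n" .
  moreover have "col X j - col Y j \<in> carrier_vec na" using cX cY by simp
  ultimately have "col X j - col Y j = 0\<^sub>v na" using inj by blast
  thus "col X j = col Y j" by (rule vec_diff_zero[OF cX cY])
qed (use X Y in simp_all)

lemma exact_comp_zero:
  fixes i p :: "'a::field mat"
  assumes i: "i \<in> carrier_mat n na" and p: "p \<in> carrier_mat nb n"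
    and exact: "\<forall>v\<in>carrier_vec n. p *\<^sub>v v = 0\<^sub>v nb \<longleftrightarrow> (\<exists>u\<in>carrier_vec na. v = i *\<^sub>v u)"
  shows "p * i = 0\<^sub>m nb na"
proof (rule mat_col_eqI)
  fix j assume "j < dim_col (0\<^sub>m nb na :: 'a mat)"
  hence j: "j < na" by simp
  have "col (p * i) j = p *\<^sub>v (i *\<^sub>v unit_vec na j)"
    using col_mult2[OF p i j] col_as_mult_vec[OF i j] by simp
  also have "\<dots> = 0\<^sub>v nb"
  proof -
    have "i *\<^sub>v unit_vec na j \<in> carrier_vec n" using i by simp
    moreover have "\<exists>u\<in>carrier_vec na. i *\<^sub>v unit_vec na j = i *\<^sub>v u" using unit_vec_carrier by blast
    ultimately show ?thesis using exact by blast
  qed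
  finally show "col (p * i) j = col (0\<^sub>m nb na) j" using j by simp
qed (use p i in simp_all)

lemma surjective_mat_section:
  fixes p :: "'a::field mat"
  assumes p: "p \<in> carrier_mat nb n"
    and surj: "\<forall>w\<in>carrier_vec nb. \<exists>v\<in>carrier_vec n. p *\<^sub>v v = w"
  shows "\<exists>s\<in>carrier_mat n nb. p * s = 1\<^sub>m nb"
proof -
  have "\<forall>j. \<exists>v. v \<in> carrier_vec n \<and> p *\<^sub>v v = unit_vec nb j" using surj unit_vec_carrier by blast
  then obtain vs where vs: "\<And>j. vs j \<in> carrier_vec n \<and> p *\<^sub>v vs j = unit_vec nb j" by metis
  define s where "s = mat n nb (\<lambda>(r,j). vs j $ r)"
  have s: "s \<in> carrier_mat n nb" unfolding s_def by simp
  have col_s: "col s j = vs j" if "j < nb" for j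
    using vs[of j] that unfolding s_def by (intro eq_vecI) auto
  have "p * s = 1\<^sub>m nb"
  proof (rule mat_col_eqI)
    fix j assume "j < dim_col (1\<^sub>m nb :: 'a mat)"
    hence j: "j < nb" by simp
    show "col (p * s) j = col (1\<^sub>m nb) j" using col_mult2[OF p s j] col_s[OF j] vs[of j] j by simp
  qed (use p s in simp_all)
  thus ?thesis using s by blast
qed

text \<open>Given a section s, the vectors e_k - s p e_k lie in ker p = im i; their i-preimages form the
  columns of a retraction R with i R + s p = 1.\<close>

lemma exact_retraction:
  fixes i p s :: "'a::field mat"
  assumes i: "i \<in> carrier_mat n na" and p: "p \<in> carrier_mat nb n" and s: "s \<in> carrier_mat n nb"
    and p_s: "p * s = 1\<^sub>m nb"
    and exact: "\<forall>v\<in>carrier_vec n. p *\<^sub>v v = 0\<^sub>v nb \<longleftrightarrow> (\<exists>u\<in>carrier_vec na. v = i *\<^sub>v u)"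
  shows "\<exists>R\<in>carrier_mat na n. i * R + s * p = 1\<^sub>m n"
proof -
  have p_s_vec: "p *\<^sub>v (s *\<^sub>v w) = w" if "w \<in> carrier_vec nb" for w
    using that p s p_s by (simp add: assoc_mult_mat_vec[symmetric, of p nb n s nb w])
  define e where "e = (\<lambda>k. unit_vec n k - s *\<^sub>v (p *\<^sub>v unit_vec n k))"
  have e: "e k \<in> carrier_vec n" for k unfolding e_def using s p by simp
  have p_e: "p *\<^sub>v e k = 0\<^sub>v nb" for k
  proof -
    have "p *\<^sub>v e k = p *\<^sub>v unit_vec n k - p *\<^sub>v (s *\<^sub>v (p *\<^sub>v unit_vec n k))"
      unfolding e_def using p s by (simp add: mult_minus_distrib_mat_vec[of p nb n])
    also have "\<dots> = 0\<^sub>v nb" using p_s_vec[of "p *\<^sub>v unit_vec n k"] p by simp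
    finally show ?thesis .
  qed
  have "\<exists>u. u \<in> carrier_vec na \<and> e k = i *\<^sub>v u" for k
  proof -
    have "\<exists>u\<in>carrier_vec na. e k = i *\<^sub>v u" using exact e[of k] p_e[of k] by blast
    thus ?thesis by blast
  qed
  then obtain us where us: "\<And>k. us k \<in> carrier_vec na \<and> e k = i *\<^sub>v us k" by metis
  define R where "R = mat na n (\<lambda>(r,k). us k $ r)"
  have R: "R \<in> carrier_mat na n" unfolding R_def by simp
  have col_R: "col R k = us k" if "k < n" for k
    using us[of k] that unfolding R_def by (intro eq_vecI) auto
  have "i * R + s * p = 1\<^sub>m n"
  proof (rule mat_col_eqI)
    fix k assume "k < dim_col (1\<^sub>m n :: 'a mat)"
    hence k: "k < n" by simp
    have "col (i * R + s * p) k = col (i * R) k + col (s * p) k"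
      using i R s p k by (intro col_add[of _ n n]) auto
    also have "\<dots> = i *\<^sub>v us k + s *\<^sub>v (p *\<^sub>v unit_vec n k)"
      unfolding col_mult2[OF i R k] col_mult2[OF s p k] col_R[OF k] col_as_mult_vec[OF p k] ..
    also have "\<dots> = e k + s *\<^sub>v (p *\<^sub>v unit_vec n k)" using us[of k] by simp
    also have "\<dots> = unit_vec n k" unfolding e_def using s p by (intro eq_vecI) auto
    finally show "col (i * R + s * p) k = col (1\<^sub>m n) k" using k by simp
  qed (use i R s p in simp_all)
  thus ?thesis using R by blast
qed

lemma split_ses_exists:
  fixes i p :: "'a::field mat"
  assumes i: "i \<in> carrier_mat n na" and p: "p \<in> carrier_mat nb n"
    and inj: "\<forall>u\<in>carrier_vec na. i *\<^sub>v u = 0\<^sub>v n \<longrightarrow> u = 0\<^sub>v na"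
    and surj: "\<forall>w\<in>carrier_vec nb. \<exists>v\<in>carrier_vec n. p *\<^sub>v v = w"
    and exact: "\<forall>v\<in>carrier_vec n. p *\<^sub>v v = 0\<^sub>v nb \<longleftrightarrow> (\<exists>u\<in>carrier_vec na. v = i *\<^sub>v u)"
  shows "\<exists>s R. split_ses na nb n i p s R"
proof -
  have p_i: "p * i = 0\<^sub>m nb na" by (rule exact_comp_zero[OF i p exact])
  obtain s where s: "s \<in> carrier_mat n nb" and p_s: "p * s = 1\<^sub>m nb"
    using surjective_mat_section[OF p surj] by blast
  obtain R where R: "R \<in> carrier_mat na n" and split: "i * R + s * p = 1\<^sub>m n"
    using exact_retraction[OF i p s p_s exact] by blast
  have R_i: "R * i = 1\<^sub>m na"
  proof (rule mat_injective_cancel[OF i inj])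
    have "i * (R * i) = (i * R + s * p) * i" using i R s p by (simp add: mat_ring_simps p_i)
    thus "i * (R * i) = i * 1\<^sub>m na" using split i by simp
  qed (use R i in auto)
  have R_s: "R * s = 0\<^sub>m na nb"
  proof (rule mat_injective_cancel[OF i inj])
    have "i * (R * s) + s = (i * R + s * p) * s" using i R s p by (simp add: mat_ring_simps p_s)
    then have "i * (R * s) = 0\<^sub>m n nb"
      using split i R s by (intro mat_add_cancel_right[of _ n nb s]) auto
    thus "i * (R * s) = i * 0\<^sub>m na nb" using i by simp
  qed (use R s in auto)
  have "split_ses na nb n i p s R"
    by unfold_locales (fact i p s R R_i R_s p_i p_s split)+
  thus ?thesis by blast
qed


section \<open>The automorphism group of a quiver representation\<close>

lemma matinv_eq:
  fixes A :: "'a::semiring_1 mat"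
  assumes A: "A \<in> carrier_mat n n" and B: "B \<in> carrier_mat n n"
    and AB: "A * B = 1\<^sub>m n" and BA: "B * A = 1\<^sub>m n"
  shows "matinv A = B"
  unfolding matinv_def
proof (rule the_equality)
  show "B \<in> carrier_mat (dim_row A) (dim_row A) \<and> A * B = 1\<^sub>m (dim_row A) \<and> B * A = 1\<^sub>m (dim_row A)"
    using A B AB BA by simp
next
  fix B' assume "B' \<in> carrier_mat (dim_row A) (dim_row A) \<and> A * B' = 1\<^sub>m (dim_row A) \<and> B' * A = 1\<^sub>m (dim_row A)"
  hence B': "B' \<in> carrier_mat n n" "B' * A = 1\<^sub>m n" using A by auto
  have "B' = B' * (A * B)" using B' AB by simp
  also have "\<dots> = (B' * A) * B" using A B B'(1) by (simp add: mat_mult_assoc_dims)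
  finally show "B' = B" using B'(2) B by simp
qed

lemma twisted_conj_fixed_iff:
  fixes gb :: "'a::semiring_1 mat"
  assumes gb: "gb \<in> carrier_mat nb nb" and ga: "ga \<in> carrier_mat na na" and gai: "gai \<in> carrier_mat na na"
    and S: "S \<in> carrier_mat nb na" and inv1: "ga * gai = 1\<^sub>m na" and inv2: "gai * ga = 1\<^sub>m na"
  shows "gb * S * gai = S \<longleftrightarrow> gb * S = S * ga"
proof
  assume h: "gb * S * gai = S"
  have "gb * S = gb * S * (gai * ga)" using inv2 gb S by simp
  also have "\<dots> = (gb * S * gai) * ga" using gb S gai ga by (simp add: mat_mult_assoc_dims)
  finally show "gb * S = S * ga" using h by simp
next
  assume h: "gb * S = S * ga"
  have "gb * S * gai = S * (ga * gai)" using h gb S gai ga by (simp add: mat_mult_assoc_dims)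
  thus "gb * S * gai = S" using inv1 S by simp
qed

lemma End_carrier: "g \<in> End_Q Q \<Longrightarrow> c \<in> verts Q \<Longrightarrow> g c \<in> carrier_mat (dim Q c) (dim Q c)"
  unfolding End_Q_def by auto

lemma End_undefined: "g \<in> End_Q Q \<Longrightarrow> c \<notin> verts Q \<Longrightarrow> g c = undefined"
  unfolding End_Q_def extensional_def by auto

lemma End_arrow: "g \<in> End_Q Q \<Longrightarrow> e \<in> arrs Q \<Longrightarrow> amap Q e * g (src Q e) = g (tgt Q e) * amap Q e"
  unfolding End_Q_def by auto

lemma Aut_End: "g \<in> Aut_Q Q \<Longrightarrow> g \<in> End_Q Q"
  unfolding Aut_Q_def by auto

lemma Aut_inv:
  assumes g: "g \<in> Aut_Q Q"
  shows "tuple_inv Q g \<in> End_Q Q" "\<And>c. c \<in> verts Q \<Longrightarrow> g c * tuple_inv Q g c = 1\<^sub>m (dim Q c)"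
    "\<And>c. c \<in> verts Q \<Longrightarrow> tuple_inv Q g c * g c = 1\<^sub>m (dim Q c)"
    "\<And>c. c \<in> verts Q \<Longrightarrow> matinv (g c) = tuple_inv Q g c"
proof -
  obtain Y where Y: "Y \<in> End_Q Q" "\<forall>c\<in>verts Q. g c * Y c = 1\<^sub>m (dim Q c) \<and> Y c * g c = 1\<^sub>m (dim Q c)"
    and gE: "g \<in> End_Q Q" using g unfolding Aut_Q_def by blast
  have inv_Y: "matinv (g c) = Y c" if c: "c \<in> verts Q" for c
    using matinv_eq[OF End_carrier[OF gE c] End_carrier[OF Y(1) c]] Y(2) c by blast
  have "tuple_inv Q g = Y"
    using inv_Y End_undefined[OF Y(1)] unfolding tuple_inv_def by (intro ext) auto
  thus "tuple_inv Q g \<in> End_Q Q" "\<And>c. c \<in> verts Q \<Longrightarrow> g c * tuple_inv Q g c = 1\<^sub>m (dim Q c)"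
    "\<And>c. c \<in> verts Q \<Longrightarrow> tuple_inv Q g c * g c = 1\<^sub>m (dim Q c)"
    "\<And>c. c \<in> verts Q \<Longrightarrow> matinv (g c) = tuple_inv Q g c"
    using Y inv_Y by auto
qed

lemma Aut_matinv:
  assumes g: "g \<in> Aut_Q Q" and c: "c \<in> verts Q"
  shows "matinv (g c) \<in> carrier_mat (dim Q c) (dim Q c)"
    "g c * matinv (g c) = 1\<^sub>m (dim Q c)" "matinv (g c) * g c = 1\<^sub>m (dim Q c)"
  using End_carrier[OF Aut_inv(1)[OF g] c] Aut_inv(2,3)[OF g c] unfolding Aut_inv(4)[OF g c] by auto

lemma End_mult:
  assumes Q: "is_quiver_rep Q" and g: "g \<in> End_Q Q" and h: "h \<in> End_Q Q"
  shows "tuple_mult Q g h \<in> End_Q Q"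
  unfolding End_Q_def
proof (intro CollectI conjI ballI)
  show "tuple_mult Q g h \<in> extensional (verts Q)" unfolding tuple_mult_def by simp
  fix c assume c: "c \<in> verts Q"
  thus "tuple_mult Q g h c \<in> carrier_mat (dim Q c) (dim Q c)"
    using mult_carrier_mat[OF End_carrier[OF g c] End_carrier[OF h c]] unfolding tuple_mult_def by simp
next
  fix e assume e: "e \<in> arrs Q"
  let ?u = "src Q e" and ?v = "tgt Q e"
  have st: "?u \<in> verts Q" "?v \<in> verts Q" and am: "amap Q e \<in> carrier_mat (dim Q ?v) (dim Q ?u)"
    using Q e unfolding is_quiver_rep_def by auto
  note c = End_carrier[OF g st(1)] End_carrier[OF h st(1)] End_carrier[OF g st(2)] End_carrier[OF h st(2)]
  have "amap Q e * (g ?u * h ?u) = (amap Q e * g ?u) * h ?u"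
    using c am by (simp add: mat_mult_assoc_dims)
  also have "\<dots> = g ?v * (amap Q e * h ?u)"
    unfolding End_arrow[OF g e] using c am by (simp add: mat_mult_assoc_dims)
  also have "\<dots> = (g ?v * h ?v) * amap Q e"
    unfolding End_arrow[OF h e] using c am by (simp add: mat_mult_assoc_dims)
  finally show "amap Q e * tuple_mult Q g h ?u = tuple_mult Q g h ?v * amap Q e"
    unfolding tuple_mult_def using st by simp
qed

lemma one_End: assumes Q: "is_quiver_rep Q" shows "tuple_one Q \<in> End_Q Q"
  unfolding End_Q_def tuple_one_def
proof (intro CollectI conjI ballI)
  fix e assume e: "e \<in> arrs Q"
  have "src Q e \<in> verts Q" "tgt Q e \<in> verts Q" "amap Q e \<in> carrier_mat (dim Q (tgt Q e)) (dim Q (src Q e))"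
    using Q e unfolding is_quiver_rep_def by auto
  thus "amap Q e * (\<lambda>c\<in>verts Q. 1\<^sub>m (dim Q c)) (src Q e) = (\<lambda>c\<in>verts Q. 1\<^sub>m (dim Q c)) (tgt Q e) * amap Q e"
    by simp
qed auto

lemma one_Aut: assumes Q: "is_quiver_rep Q" shows "tuple_one Q \<in> Aut_Q Q"
  unfolding Aut_Q_def using one_End[OF Q] by (auto simp: tuple_one_def intro!: bexI[of _ "tuple_one Q"])

lemma matinv_mult:
  assumes g: "g \<in> Aut_Q Q" and h: "h \<in> Aut_Q Q" and v: "v \<in> verts Q"
  shows "matinv (g v * h v) = matinv (h v) * matinv (g v)"
proof -
  let ?n = "dim Q v"
  note c = End_carrier[OF Aut_End[OF g] v] End_carrier[OF Aut_End[OF h] v]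
  note gi = Aut_matinv[OF g v] and hi = Aut_matinv[OF h v]
  show ?thesis
  proof (rule matinv_eq[of _ ?n])
    have "g v * h v * (matinv (h v) * matinv (g v)) = g v * (h v * matinv (h v)) * matinv (g v)"
      using c gi(1) hi(1) by (simp add: mat_mult_assoc_dims)
    also have "\<dots> = 1\<^sub>m ?n" using c gi hi by simp
    finally show "g v * h v * (matinv (h v) * matinv (g v)) = 1\<^sub>m ?n" .
    have "matinv (h v) * matinv (g v) * (g v * h v) = matinv (h v) * (matinv (g v) * g v) * h v"
      using c gi(1) hi(1) by (simp add: mat_mult_assoc_dims)
    also have "\<dots> = 1\<^sub>m ?n" using c gi hi by simp
    finally show "matinv (h v) * matinv (g v) * (g v * h v) = 1\<^sub>m ?n" .
  qed (use c gi hi in simp_all)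
qed

lemma Aut_mult:
  assumes Q: "is_quiver_rep Q" and g: "g \<in> Aut_Q Q" and h: "h \<in> Aut_Q Q"
  shows "tuple_mult Q g h \<in> Aut_Q Q"
proof -
  let ?gi = "tuple_inv Q g" and ?hi = "tuple_inv Q h"
  have E: "tuple_mult Q g h \<in> End_Q Q" "tuple_mult Q ?hi ?gi \<in> End_Q Q"
    using End_mult[OF Q] Aut_End[OF g] Aut_End[OF h] Aut_inv(1)[OF g] Aut_inv(1)[OF h] by auto
  have "tuple_mult Q g h c * tuple_mult Q ?hi ?gi c = 1\<^sub>m (dim Q c) \<and>
        tuple_mult Q ?hi ?gi c * tuple_mult Q g h c = 1\<^sub>m (dim Q c)" if c: "c \<in> verts Q" for c
  proof -
    note cs = End_carrier[OF Aut_End[OF g] c] End_carrier[OF Aut_End[OF h] c]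
      End_carrier[OF Aut_inv(1)[OF g] c] End_carrier[OF Aut_inv(1)[OF h] c]
    have "g c * h c * (?hi c * ?gi c) = g c * (h c * ?hi c) * ?gi c"
      using cs by (simp add: mat_mult_assoc_dims)
    also have "\<dots> = 1\<^sub>m (dim Q c)" using Aut_inv(2)[OF g c] Aut_inv(2)[OF h c] cs by simp
    finally have right: "g c * h c * (?hi c * ?gi c) = 1\<^sub>m (dim Q c)" .
    have "?hi c * ?gi c * (g c * h c) = ?hi c * (?gi c * g c) * h c"
      using cs by (simp add: mat_mult_assoc_dims)
    also have "\<dots> = 1\<^sub>m (dim Q c)" using Aut_inv(3)[OF g c] Aut_inv(3)[OF h c] cs by simp
    finally have left: "?hi c * ?gi c * (g c * h c) = 1\<^sub>m (dim Q c)" .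
    show ?thesis using left right c unfolding tuple_mult_def by simp
  qed
  thus ?thesis unfolding Aut_Q_def using E by blast
qed

lemma Aut_inv_Aut: assumes g: "g \<in> Aut_Q Q" shows "tuple_inv Q g \<in> Aut_Q Q"
  unfolding Aut_Q_def using Aut_inv[OF g] Aut_End[OF g] by blast

lemma tuple_mult_assoc:
  assumes "g \<in> End_Q Q" "h \<in> End_Q Q" "k \<in> End_Q Q"
  shows "tuple_mult Q (tuple_mult Q g h) k = tuple_mult Q g (tuple_mult Q h k)"
proof
  fix c show "tuple_mult Q (tuple_mult Q g h) k c = tuple_mult Q g (tuple_mult Q h k) c"
  proof (cases "c \<in> verts Q")
    case True
    show ?thesis using End_carrier[OF assms(1) True] End_carrier[OF assms(2) True]
        End_carrier[OF assms(3) True] True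
      unfolding tuple_mult_def by (simp add: mat_mult_assoc_dims)
  qed (simp add: tuple_mult_def)
qed

lemma tuple_one_mult:
  assumes g: "g \<in> End_Q Q"
  shows "tuple_mult Q (tuple_one Q) g = g"
proof
  fix c show "tuple_mult Q (tuple_one Q) g c = g c"
  proof (cases "c \<in> verts Q")
    case True thus ?thesis using End_carrier[OF g True] unfolding tuple_mult_def tuple_one_def by simp
  next
    case False thus ?thesis using End_undefined[OF g False] unfolding tuple_mult_def by simp
  qed
qed

lemma tuple_inv_mult:
  assumes g: "g \<in> Aut_Q Q"
  shows "tuple_mult Q (tuple_inv Q g) g = tuple_one Q"
proof
  fix c show "tuple_mult Q (tuple_inv Q g) g c = tuple_one Q c"
    using Aut_inv(3)[OF g, of c] unfolding tuple_mult_def tuple_one_def by simp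
qed

lemma finite_End:
  assumes "finite (verts Q)"
  shows "finite (End_Q Q :: ('v \<Rightarrow> 'a::{finite,semiring_1} mat) set)"
proof (rule finite_subset)
  show "End_Q Q \<subseteq> PiE (verts Q) (\<lambda>c. carrier_mat (dim Q c) (dim Q c))"
    unfolding End_Q_def by (auto simp: PiE_def Pi_def)
  show "finite (PiE (verts Q) (\<lambda>c. carrier_mat (dim Q c) (dim Q c) :: 'a mat set))"
    using assms by (intro finite_PiE) (simp_all add: finite_carrier_mat)
qed

lemma burnside_Aut_subgroup:
  fixes Q :: "('v, 'e, 'a::{finite,semiring_1}) quiver_rep"
  assumes Q: "is_quiver_rep Q" and G: "is_subgroup_Aut G Q" and fin_E: "finite E"
    and act_one: "\<And>x. x \<in> E \<Longrightarrow> act (tuple_one Q) x = x"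
    and act_mul: "\<And>g h x. g \<in> G \<Longrightarrow> h \<in> G \<Longrightarrow> x \<in> E \<Longrightarrow> act (tuple_mult Q g h) x = act g (act h x)"
    and act_closed: "\<And>g x. g \<in> G \<Longrightarrow> x \<in> E \<Longrightarrow> act g x \<in> E"
  shows "num_orbits G act E * card G = (\<Sum>g\<in>G. card {x\<in>E. act g x = x})"
proof (rule burnside_explicit[where mul = "tuple_mult Q" and one = "tuple_one Q"])
  have G_Aut: "G \<subseteq> Aut_Q Q" and G_inv: "\<And>g. g \<in> G \<Longrightarrow> tuple_inv Q g \<in> G"
    using G unfolding is_subgroup_Aut_def by auto
  show "finite G"
    using finite_End[of Q] Q G_Aut Aut_End unfolding is_quiver_rep_def by (meson finite_subset subsetI)
  show "\<And>g h k. g \<in> G \<Longrightarrow> h \<in> G \<Longrightarrow> k \<in> G \<Longrightarrow>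
      tuple_mult Q (tuple_mult Q g h) k = tuple_mult Q g (tuple_mult Q h k)"
    using tuple_mult_assoc G_Aut Aut_End by blast
  show "\<And>g. g \<in> G \<Longrightarrow> tuple_mult Q (tuple_one Q) g = g" using tuple_one_mult G_Aut Aut_End by blast
  show "\<And>g. g \<in> G \<Longrightarrow> \<exists>h\<in>G. tuple_mult Q h g = tuple_one Q" using tuple_inv_mult G_Aut G_inv by blast
qed (use G fin_E act_one act_mul act_closed in \<open>auto simp: is_subgroup_Aut_def\<close>)

lemma conj_End:
  assumes Q: "is_quiver_rep Q" and g: "g \<in> Aut_Q Q" and Y: "Y \<in> End_Q Q"
  shows "conj_act Q g Y \<in> End_Q Q"
proof -
  have "conj_act Q g Y = tuple_mult Q (tuple_mult Q g Y) (tuple_inv Q g)"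
    unfolding conj_act_def tuple_mult_def using Aut_inv(4)[OF g] by (intro ext) auto
  thus ?thesis by (simp add: End_mult[OF Q] Aut_End[OF g] Y Aut_inv(1)[OF g])
qed

lemma conj_one:
  fixes Y :: "'v \<Rightarrow> 'a::semiring_1 mat"
  assumes Y: "Y \<in> End_Q Q"
  shows "conj_act Q (tuple_one Q) Y = Y"
proof
  fix c show "conj_act Q (tuple_one Q) Y c = Y c"
  proof (cases "c \<in> verts Q")
    case True
    have "matinv (1\<^sub>m (dim Q c)) = (1\<^sub>m (dim Q c) :: 'a mat)" by (rule matinv_eq) auto
    thus ?thesis using True End_carrier[OF Y True] unfolding conj_act_def tuple_one_def by simp
  qed (use End_undefined[OF Y] in \<open>simp add: conj_act_def\<close>)
qed

lemma conj_mult: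
  assumes g: "g \<in> Aut_Q Q" and h: "h \<in> Aut_Q Q" and Y: "Y \<in> End_Q Q"
  shows "conj_act Q (tuple_mult Q g h) Y = conj_act Q g (conj_act Q h Y)"
proof
  fix c show "conj_act Q (tuple_mult Q g h) Y c = conj_act Q g (conj_act Q h Y) c"
  proof (cases "c \<in> verts Q")
    case True
    note cs = End_carrier[OF Aut_End[OF g] True] End_carrier[OF Aut_End[OF h] True]
      End_carrier[OF Y True] Aut_matinv(1)[OF g True] Aut_matinv(1)[OF h True]
    show ?thesis using True cs matinv_mult[OF g h True]
      unfolding conj_act_def tuple_mult_def by (simp add: mat_mult_assoc_dims)
  qed (simp add: conj_act_def)
qed


section \<open>The extension Omega(Q,a,b)\<close>

locale omega_setting = split_ses "dim Q a" "dim Q b" "dim Q' c" "amap Q' e1" "amap Q' e2" s R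
  for Q Q' :: "('v, 'e, 'a::{finite,field}) quiver_rep" and a b c :: 'v and e1 e2 :: 'e and s R +
  fixes X :: "'v \<Rightarrow> 'a mat" and H :: "('v \<Rightarrow> 'a mat) set"
  assumes Q: "is_quiver_rep Q" and Q': "is_quiver_rep Q'"
    and a: "a \<in> verts Q" and b: "b \<in> verts Q"
    and X: "X \<in> End_Q Q" and H: "is_subgroup_Aut H Q" and H_fixes_X: "\<forall>g\<in>H. conj_act Q g X = X"
    and c_new: "c \<notin> verts Q"
    and verts_Q': "verts Q' = insert c (verts Q)" and arrs_Q': "arrs Q' = arrs Q \<union> {e1, e2}"
    and old_arrs: "\<forall>e\<in>arrs Q. src Q' e = src Q e \<and> tgt Q' e = tgt Q e \<and> amap Q' e = amap Q e"
    and old_dims: "\<forall>v\<in>verts Q. dim Q' v = dim Q v"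
    and e1: "src Q' e1 = a" "tgt Q' e1 = c" and e2: "src Q' e2 = c" "tgt Q' e2 = b"
begin

abbreviation "na \<equiv> dim Q a"
abbreviation "nb \<equiv> dim Q b"
abbreviation "n \<equiv> dim Q' c"

definition glue :: "('v \<Rightarrow> 'a mat) \<Rightarrow> 'a mat \<Rightarrow> 'v \<Rightarrow> 'a mat" where
  "glue Z0 Z = (\<lambda>v\<in>verts Q'. if v = c then Z else Z0 v)"

lemma glue_old: "v \<in> verts Q \<Longrightarrow> glue Z0 Z v = Z0 v"
  unfolding glue_def using c_new verts_Q' by auto

lemma glue_new: "glue Z0 Z c = Z"
  unfolding glue_def using verts_Q' by auto

lemma restr_glue: "Z0 \<in> extensional (verts Q) \<Longrightarrow> restr_to Q (glue Z0 Z) = Z0"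
  unfolding restr_to_def by (rule ext) (auto simp: glue_old extensional_def)

lemma glue_restr: "Y \<in> End_Q Q' \<Longrightarrow> glue (restr_to Q Y) (Y c) = Y"
  using End_undefined[of Y Q'] verts_Q' unfolding glue_def restr_to_def by (intro ext) auto

lemma End_induces: assumes Y: "Y \<in> End_Q Q'" shows "induces (Y a) (Y b) (Y c)"
proof -
  have "e1 \<in> arrs Q'" "e2 \<in> arrs Q'" using arrs_Q' by auto
  from End_arrow[OF Y this(1)] End_arrow[OF Y this(2)]
  show ?thesis unfolding induces_def using End_carrier[OF Y, of c] verts_Q' e1 e2 by simp
qed

lemma glue_End:
  assumes Z0: "Z0 \<in> End_Q Q" and Z: "induces (Z0 a) (Z0 b) Z"
  shows "glue Z0 Z \<in> End_Q Q'"
  unfolding End_Q_def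
proof (intro CollectI conjI ballI)
  show "glue Z0 Z \<in> extensional (verts Q')" unfolding glue_def by simp
next
  fix v assume v: "v \<in> verts Q'"
  show "glue Z0 Z v \<in> carrier_mat (dim Q' v) (dim Q' v)"
  proof (cases "v = c")
    case True thus ?thesis using Z unfolding induces_def by (simp add: glue_new)
  next
    case False hence "v \<in> verts Q" using v verts_Q' by simp
    thus ?thesis using End_carrier[OF Z0] old_dims by (simp add: glue_old)
  qed
next
  fix e assume e: "e \<in> arrs Q'"
  show "amap Q' e * glue Z0 Z (src Q' e) = glue Z0 Z (tgt Q' e) * amap Q' e"
  proof (cases "e \<in> arrs Q")
    case True
    have "src Q e \<in> verts Q" "tgt Q e \<in> verts Q" using Q True unfolding is_quiver_rep_def by auto
    thus ?thesis using old_arrs True End_arrow[OF Z0 True] by (simp add: glue_old)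
  next
    case False
    hence "e = e1 \<or> e = e2" using e arrs_Q' by auto
    thus ?thesis using Z a b unfolding induces_def by (auto simp: e1 e2 glue_old glue_new)
  qed
qed

lemma H_Aut: "g \<in> H \<Longrightarrow> g \<in> Aut_Q Q"
  using H unfolding is_subgroup_Aut_def by auto

lemma H_End: "g \<in> H \<Longrightarrow> g \<in> End_Q Q"
  using H_Aut Aut_End by blast

lemma H_carrier: "g \<in> H \<Longrightarrow> g a \<in> carrier_mat na na" "g \<in> H \<Longrightarrow> g b \<in> carrier_mat nb nb"
  using End_carrier[OF H_End a] End_carrier[OF H_End b] by auto

lemma X_carrier: "X a \<in> carrier_mat na na" "X b \<in> carrier_mat nb nb"
  using End_carrier[OF X a] End_carrier[OF X b] by auto

lemma H_conj_X: assumes g: "g \<in> H" and v: "v \<in> verts Q" shows "g v * X v * matinv (g v) = X v"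
proof -
  have "conj_act Q g X v = X v" using H_fixes_X g by simp
  thus ?thesis unfolding conj_act_def using v by simp
qed

lemma H_commutes_X: assumes g: "g \<in> H" and v: "v \<in> verts Q" shows "g v * X v = X v * g v"
  using H_conj_X[OF g v] twisted_conj_fixed_iff[OF End_carrier[OF H_End[OF g] v]
      End_carrier[OF H_End[OF g] v] Aut_matinv(1)[OF H_Aut[OF g] v] End_carrier[OF X v]
      Aut_matinv(2,3)[OF H_Aut[OF g] v]]
  by simp


definition lifts :: "('v \<Rightarrow> 'a mat) \<Rightarrow> ('v \<Rightarrow> 'a mat) set" where
  "lifts g = {g' \<in> Aut_Q Q'. restr_to Q g' = g}"

lemma lift_decompose:
  assumes "g' \<in> lifts g"
  shows "g' = glue g (g' c)" "induces (g a) (g b) (g' c)"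
proof -
  have E: "g' \<in> End_Q Q'" and r: "restr_to Q g' = g" using assms Aut_End unfolding lifts_def by auto
  show "g' = glue g (g' c)" using glue_restr[OF E] r by simp
  have "g a = g' a" "g b = g' b" using a b unfolding r[symmetric] restr_to_def by auto
  thus "induces (g a) (g b) (g' c)" using End_induces[OF E] by simp
qed

lemma glue_block_lift:
  assumes g: "g \<in> H" and M: "M \<in> carrier_mat na nb"
  shows "glue g (block (g a) M (g b)) \<in> lifts g"
proof -
  let ?gi = "tuple_inv Q g"
  have gA: "g \<in> Aut_Q Q" by (rule H_Aut[OF g])
  have giE: "?gi \<in> End_Q Q" by (rule Aut_inv(1)[OF gA])
  note ga = H_carrier(1)[OF g] and gb = H_carrier(2)[OF g]
  have gia: "?gi a \<in> carrier_mat na na" and gib: "?gi b \<in> carrier_mat nb nb"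
    using End_carrier[OF giE a] End_carrier[OF giE b] by auto
  define M' where "M' = - (?gi a * M * ?gi b)"
  have M': "M' \<in> carrier_mat na nb" unfolding M'_def using gia gib M by auto
  define Z where "Z = block (g a) M (g b)"
  define Z' where "Z' = block (?gi a) M' (?gi b)"
  have inverse: "Z * Z' = 1\<^sub>m n" "Z' * Z = 1\<^sub>m n"
    unfolding Z_def Z'_def M'_def
    using block_inverse[OF ga gia gb gib M] Aut_inv(2,3)[OF gA a] Aut_inv(2,3)[OF gA b] by auto
  have E1: "glue g Z \<in> End_Q Q'"
    unfolding Z_def by (rule glue_End[OF H_End[OF g] induces_block[OF ga M gb]])
  have E2: "glue ?gi Z' \<in> End_Q Q'"
    unfolding Z'_def by (rule glue_End[OF giE induces_block[OF gia M' gib]])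
  have "glue g Z v * glue ?gi Z' v = 1\<^sub>m (dim Q' v) \<and> glue ?gi Z' v * glue g Z v = 1\<^sub>m (dim Q' v)"
    if v: "v \<in> verts Q'" for v
  proof (cases "v = c")
    case True thus ?thesis using inverse by (simp add: glue_new)
  next
    case False hence "v \<in> verts Q" using v verts_Q' by simp
    thus ?thesis using Aut_inv(2,3)[OF gA] old_dims by (simp add: glue_old)
  qed
  hence "glue g Z \<in> Aut_Q Q'" unfolding Aut_Q_def using E1 E2 by blast
  thus ?thesis unfolding lifts_def Z_def using restr_glue H_End[OF g] unfolding End_Q_def by auto
qed

lemma card_lifts:
  assumes g: "g \<in> H"
  shows "card (lifts g) = card (carrier_mat na nb :: 'a mat set)"
proof (rule bij_betw_same_card[of "\<lambda>g'. R * g' c * s"],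
       rule bij_betw_byWitness[where f' = "\<lambda>M. glue g (block (g a) M (g b))"])
  note ga = H_carrier(1)[OF g] and gb = H_carrier(2)[OF g]
  show "\<forall>g'\<in>lifts g. glue g (block (g a) (R * g' c * s) (g b)) = g'"
  proof
    fix g' assume g': "g' \<in> lifts g"
    show "glue g (block (g a) (R * g' c * s) (g b)) = g'"
      using induces_eq_block[OF ga gb lift_decompose(2)[OF g']] lift_decompose(1)[OF g'] by simp
  qed
  show "\<forall>M\<in>carrier_mat na nb. R * glue g (block (g a) M (g b)) c * s = M"
    using corner_block[OF ga _ gb] by (simp add: glue_new)
  show "(\<lambda>g'. R * g' c * s) ` lifts g \<subseteq> carrier_mat na nb"
  proof
    fix M assume "M \<in> (\<lambda>g'. R * g' c * s) ` lifts g"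
    then obtain g' where "g' \<in> lifts g" "M = R * g' c * s" by blast
    thus "M \<in> carrier_mat na nb" using lift_decompose(2) unfolding induces_def by auto
  qed
  show "(\<lambda>M. glue g (block (g a) M (g b))) ` carrier_mat na nb \<subseteq> lifts g"
    using glue_block_lift[OF g] by blast
qed


definition fibre :: "('v \<Rightarrow> 'a mat) set" where
  "fibre = {Y \<in> End_Q Q'. restr_to Q Y = X}"

lemma fibre_decompose:
  assumes "Y \<in> fibre"
  shows "Y = glue X (Y c)" "induces (X a) (X b) (Y c)"
proof -
  have E: "Y \<in> End_Q Q'" and r: "restr_to Q Y = X" using assms unfolding fibre_def by auto
  show "Y = glue X (Y c)" using glue_restr[OF E] r by simp
  have "X a = Y a" "X b = Y b" using a b unfolding r[symmetric] restr_to_def by auto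
  thus "induces (X a) (X b) (Y c)" using End_induces[OF E] by simp
qed

lemma glue_in_fibre: "induces (X a) (X b) Z \<Longrightarrow> glue X Z \<in> fibre"
  unfolding fibre_def using glue_End[OF X] restr_glue X unfolding End_Q_def by auto

text \<open>Off the new vertex g' acts like g, which fixes X; so g' fixes Y iff it commutes with Y at c.\<close>

lemma lift_fixes_iff:
  assumes g: "g \<in> H" and g': "g' \<in> lifts g" and Y: "Y \<in> fibre"
  shows "conj_act Q' g' Y = Y \<longleftrightarrow> g' c * Y c = Y c * g' c"
proof -
  have g'A: "g' \<in> Aut_Q Q'" and restr_g': "restr_to Q g' = g" using g' unfolding lifts_def by auto
  have YE: "Y \<in> End_Q Q'" using Y unfolding fibre_def by auto
  have cQ': "c \<in> verts Q'" using verts_Q' by simp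
  have at_c: "g' c * Y c * matinv (g' c) = Y c \<longleftrightarrow> g' c * Y c = Y c * g' c"
    using twisted_conj_fixed_iff[OF End_carrier[OF Aut_End[OF g'A] cQ'] End_carrier[OF Aut_End[OF g'A] cQ']
        Aut_matinv(1)[OF g'A cQ'] End_carrier[OF YE cQ'] Aut_matinv(2,3)[OF g'A cQ']] .
  have old: "g' v * Y v * matinv (g' v) = Y v" if v: "v \<in> verts Q" for v
  proof -
    have "g' v = g v" "Y v = X v"
      using restr_g' fibre_decompose(1)[OF Y] glue_old[OF v] v unfolding restr_to_def
      by (metis restrict_apply')+
    thus ?thesis using H_conj_X[OF g v] by simp
  qed
  show ?thesis
  proof
    assume "conj_act Q' g' Y = Y"
    hence "conj_act Q' g' Y c = Y c" by simp
    thus "g' c * Y c = Y c * g' c" using at_c cQ' unfolding conj_act_def by simp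
  next
    assume "g' c * Y c = Y c * g' c"
    thus "conj_act Q' g' Y = Y"
      using at_c old End_undefined[OF YE] verts_Q' unfolding conj_act_def by (intro ext) auto
  qed
qed

text \<open>For compatible Z (over g) and Y (over X), commuting is an equation between corners:
  both products induce g X = X g on U_a and U_b and their corners are g_a W_Y + W_Z X_b and
  X_a W_Z + W_Y g_b.\<close>

lemma commute_iff_corners:
  assumes g: "g \<in> H" and Z: "induces (g a) (g b) Z" and Y: "induces (X a) (X b) Y"
  shows "Z * Y = Y * Z \<longleftrightarrow>
    g a * (R * Y * s) + (R * Z * s) * X b = X a * (R * Z * s) + (R * Y * s) * g b"
proof -
  note ga = H_carrier(1)[OF g] and gb = H_carrier(2)[OF g] and Xa = X_carrier(1) and Xb = X_carrier(2)
  have corner_ZY: "R * (Z * Y) * s = g a * (R * Y * s) + (R * Z * s) * X b"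
    by (rule corner_mult[OF Z Y ga gb Xa Xb])
  have corner_YZ: "R * (Y * Z) * s = X a * (R * Z * s) + (R * Y * s) * g b"
    by (rule corner_mult[OF Y Z Xa Xb ga gb])
  have ZY: "induces (g a * X a) (g b * X b) (Z * Y)" by (rule induces_mult[OF Z Y ga gb Xa Xb])
  have YZ: "induces (g a * X a) (g b * X b) (Y * Z)"
    using induces_mult[OF Y Z Xa Xb ga gb] H_commutes_X[OF g a] H_commutes_X[OF g b] by simp
  have diag: "g a * X a \<in> carrier_mat na na" "g b * X b \<in> carrier_mat nb nb" using ga gb Xa Xb by auto
  show ?thesis
  proof
    assume "Z * Y = Y * Z" thus "g a * (R * Y * s) + (R * Z * s) * X b = X a * (R * Z * s) + (R * Y * s) * g b"
      using corner_ZY corner_YZ by simp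
  next
    assume "g a * (R * Y * s) + (R * Z * s) * X b = X a * (R * Z * s) + (R * Y * s) * g b"
    thus "Z * Y = Y * Z"
      using induces_eq_block[OF diag ZY] induces_eq_block[OF diag YZ] corner_ZY corner_YZ by metis
  qed
qed

lemma corners_of_fixed_pair:
  assumes g: "g \<in> H" and g': "g' \<in> lifts g" and Y: "Y \<in> fibre" and fixed: "conj_act Q' g' Y = Y"
  shows "R * Y c * s \<in> carrier_mat na nb" "R * g' c * s \<in> carrier_mat na nb"
    "g a * (R * Y c * s) + (R * g' c * s) * X b = X a * (R * g' c * s) + (R * Y c * s) * g b"
proof -
  have Z: "induces (g a) (g b) (g' c)" by (rule lift_decompose(2)[OF g'])
  have Yc: "induces (X a) (X b) (Y c)" by (rule fibre_decompose(2)[OF Y])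
  show "R * Y c * s \<in> carrier_mat na nb" "R * g' c * s \<in> carrier_mat na nb"
    using Z Yc unfolding induces_def by auto
  have "g' c * Y c = Y c * g' c" using lift_fixes_iff[OF g g' Y] fixed by simp
  thus "g a * (R * Y c * s) + (R * g' c * s) * X b = X a * (R * g' c * s) + (R * Y c * s) * g b"
    using commute_iff_corners[OF g Z Yc] by simp
qed

lemma fixed_pair_of_corners:
  assumes g: "g \<in> H" and T: "T \<in> carrier_mat na nb" and M: "M \<in> carrier_mat na nb"
    and eq: "g a * T + M * X b = X a * M + T * g b"
  shows "glue g (block (g a) M (g b)) \<in> lifts g" "glue X (block (X a) T (X b)) \<in> fibre"
    "conj_act Q' (glue g (block (g a) M (g b))) (glue X (block (X a) T (X b))) = glue X (block (X a) T (X b))"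
proof -
  note ga = H_carrier(1)[OF g] and gb = H_carrier(2)[OF g] and Xa = X_carrier(1) and Xb = X_carrier(2)
  show lift: "glue g (block (g a) M (g b)) \<in> lifts g" by (rule glue_block_lift[OF g M])
  have Z: "induces (g a) (g b) (block (g a) M (g b))" by (rule induces_block[OF ga M gb])
  have Y: "induces (X a) (X b) (block (X a) T (X b))" by (rule induces_block[OF Xa T Xb])
  show fib: "glue X (block (X a) T (X b)) \<in> fibre" by (rule glue_in_fibre[OF Y])
  have "block (g a) M (g b) * block (X a) T (X b) = block (X a) T (X b) * block (g a) M (g b)"
    using commute_iff_corners[OF g Z Y] eq corner_block[OF ga M gb] corner_block[OF Xa T Xb] by simp
  thus "conj_act Q' (glue g (block (g a) M (g b))) (glue X (block (X a) T (X b)))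
      = glue X (block (X a) T (X b))"
    using lift_fixes_iff[OF g lift fib] by (simp add: glue_new)
qed

lemma card_fixed_pairs:
  assumes g: "g \<in> H"
  shows "card (SIGMA g':lifts g. {Y\<in>fibre. conj_act Q' g' Y = Y}) =
    card {(T,M). T \<in> carrier_mat na nb \<and> M \<in> carrier_mat na nb \<and> g a * T + M * X b = X a * M + T * g b}"
proof (rule bij_betw_same_card[of "\<lambda>(g',Y). (R * Y c * s, R * g' c * s)"],
       rule bij_betw_byWitness[where f' = "\<lambda>(T,M). (glue g (block (g a) M (g b)), glue X (block (X a) T (X b)))"])
  note ga = H_carrier(1)[OF g] and gb = H_carrier(2)[OF g] and Xa = X_carrier(1) and Xb = X_carrier(2)
  let ?S = "SIGMA g':lifts g. {Y\<in>fibre. conj_act Q' g' Y = Y}"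
  let ?K = "{(T,M). T \<in> carrier_mat na nb \<and> M \<in> carrier_mat na nb \<and> g a * T + M * X b = X a * M + T * g b}"
  let ?corners = "\<lambda>(g',Y). (R * Y c * s, R * g' c * s)"
  let ?blocks = "\<lambda>(T,M). (glue g (block (g a) M (g b)), glue X (block (X a) T (X b)))"
  show "\<forall>x\<in>?S. ?blocks (?corners x) = x"
  proof
    fix x assume "x \<in> ?S"
    then obtain g' Y where x: "x = (g',Y)" "g' \<in> lifts g" "Y \<in> fibre" by auto
    have "glue g (block (g a) (R * g' c * s) (g b)) = g'"
      using induces_eq_block[OF ga gb lift_decompose(2)[OF x(2)]] lift_decompose(1)[OF x(2)] by simp
    moreover have "glue X (block (X a) (R * Y c * s) (X b)) = Y"
      using induces_eq_block[OF Xa Xb fibre_decompose(2)[OF x(3)]] fibre_decompose(1)[OF x(3)] by simp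
    ultimately show "?blocks (?corners x) = x" using x(1) by simp
  qed
  show "\<forall>y\<in>?K. ?corners (?blocks y) = y"
    using corner_block[OF ga _ gb] corner_block[OF Xa _ Xb] by (auto simp: glue_new)
  show "?corners ` ?S \<subseteq> ?K" using corners_of_fixed_pair[OF g] by auto
  show "?blocks ` ?K \<subseteq> ?S" using fixed_pair_of_corners[OF g] by auto
qed


abbreviation "H' \<equiv> lift_group Q' Q H"

lemma restr_tuple_ops:
  "restr_to Q (tuple_mult Q' g h) = tuple_mult Q (restr_to Q g) (restr_to Q h)"
  "restr_to Q (tuple_one Q') = tuple_one Q"
  "restr_to Q (tuple_inv Q' g) = tuple_inv Q (restr_to Q g)"
  "restr_to Q (conj_act Q' g Y) = conj_act Q (restr_to Q g) (restr_to Q Y)"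
  unfolding restr_to_def tuple_mult_def tuple_one_def tuple_inv_def conj_act_def
  using verts_Q' old_dims by (auto intro!: ext)

lemma lift_group_subgroup: "is_subgroup_Aut H' Q'"
proof -
  have "tuple_one Q' \<in> H'"
    using one_Aut[OF Q'] H unfolding lift_group_def is_subgroup_Aut_def by (simp add: restr_tuple_ops)
  moreover have "tuple_mult Q' g h \<in> H'" if "g \<in> H'" "h \<in> H'" for g h
    using that Aut_mult[OF Q'] H unfolding lift_group_def is_subgroup_Aut_def by (simp add: restr_tuple_ops)
  moreover have "tuple_inv Q' g \<in> H'" if "g \<in> H'" for g
  proof -
    have g: "g \<in> Aut_Q Q'" "restr_to Q g \<in> H" using that unfolding lift_group_def by auto
    thus ?thesis using Aut_inv_Aut[OF g(1)] H
      unfolding lift_group_def is_subgroup_Aut_def by (simp add: restr_tuple_ops)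
  qed
  ultimately show ?thesis unfolding is_subgroup_Aut_def lift_group_def by blast
qed

lemma finite_End_Q': "finite (End_Q Q')"
  using finite_End[of Q'] Q' unfolding is_quiver_rep_def by blast

lemma burnside_fibre:
  "num_orbits H' (conj_act Q') fibre * card H' = (\<Sum>g\<in>H'. card {Y\<in>fibre. conj_act Q' g Y = Y})"
proof (rule burnside_Aut_subgroup[OF Q' lift_group_subgroup])
  have H'_Aut: "g \<in> H' \<Longrightarrow> g \<in> Aut_Q Q'" for g unfolding lift_group_def by auto
  show "finite fibre" using finite_End_Q' unfolding fibre_def by simp
  show "\<And>Y. Y \<in> fibre \<Longrightarrow> conj_act Q' (tuple_one Q') Y = Y"
    using conj_one unfolding fibre_def by blast
  show "\<And>g h Y. g \<in> H' \<Longrightarrow> h \<in> H' \<Longrightarrow> Y \<in> fibre \<Longrightarrow>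
      conj_act Q' (tuple_mult Q' g h) Y = conj_act Q' g (conj_act Q' h Y)"
    using conj_mult H'_Aut unfolding fibre_def by blast
  show "\<And>g Y. g \<in> H' \<Longrightarrow> Y \<in> fibre \<Longrightarrow> conj_act Q' g Y \<in> fibre"
    using conj_End[OF Q' H'_Aut] restr_tuple_ops(4) H_fixes_X
    unfolding fibre_def lift_group_def by auto
qed

definition twisted_act :: "('v \<Rightarrow> 'a mat) \<Rightarrow> 'a mat \<Rightarrow> 'a mat" where
  "twisted_act g S = g b * S * matinv (g a)"

abbreviation "I_X \<equiv> intertw na nb (X a) (X b)"

lemma twisted_act_closed:
  assumes g: "g \<in> H" and S: "S \<in> I_X"
  shows "twisted_act g S \<in> I_X"
proof -
  note ga = H_carrier(1)[OF g] and gb = H_carrier(2)[OF g] and Xa = X_carrier(1) and Xb = X_carrier(2)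
  note gai = Aut_matinv[OF H_Aut[OF g] a]
  have Sc: "S \<in> carrier_mat nb na" and SX: "S * X a = X b * S" using S unfolding intertw_def by auto
  have gai_X: "matinv (g a) * X a = X a * matinv (g a)"
  proof -
    have "matinv (g a) * X a = matinv (g a) * X a * (g a * matinv (g a))" using gai Xa by simp
    also have "\<dots> = matinv (g a) * (g a * X a) * matinv (g a)"
      using gai(1) Xa ga by (simp add: H_commutes_X[OF g a] mat_mult_assoc_dims)
    also have "\<dots> = X a * matinv (g a)" using gai Xa ga by (simp add: mat_mult_assoc_dims[symmetric])
    finally show ?thesis .
  qed
  have "g b * S * matinv (g a) * X a = g b * (S * X a) * matinv (g a)"
    using gb Sc gai Xa by (simp add: gai_X mat_mult_assoc_dims)
  also have "\<dots> = (g b * X b) * S * matinv (g a)" using gb Sc gai Xb by (simp add: SX mat_mult_assoc_dims)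
  also have "\<dots> = X b * (g b * S * matinv (g a))"
    using gb Sc gai Xb by (simp add: H_commutes_X[OF g b] mat_mult_assoc_dims)
  finally show ?thesis using gb Sc gai unfolding twisted_act_def intertw_def by auto
qed

lemma burnside_intertwiners:
  "num_orbits H twisted_act I_X * card H = (\<Sum>g\<in>H. card {S\<in>I_X. twisted_act g S = S})"
proof (rule burnside_Aut_subgroup[OF Q H])
  show "finite I_X" unfolding intertw_def by (rule finite_subset[OF _ finite_carrier_mat]) auto
  show "twisted_act (tuple_one Q) S = S" if S: "S \<in> I_X" for S
  proof -
    have "matinv (1\<^sub>m na) = (1\<^sub>m na :: 'a mat)" by (rule matinv_eq) auto
    thus ?thesis using a b S unfolding twisted_act_def tuple_one_def intertw_def by auto
  qed
  show "twisted_act (tuple_mult Q g h) S = twisted_act g (twisted_act h S)"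
    if g: "g \<in> H" and h: "h \<in> H" and S: "S \<in> I_X" for g h S
    using a b S matinv_mult[OF H_Aut[OF g] H_Aut[OF h] a] H_carrier[OF g] H_carrier[OF h]
      Aut_matinv(1)[OF H_Aut[OF g] a] Aut_matinv(1)[OF H_Aut[OF h] a]
    unfolding twisted_act_def tuple_mult_def intertw_def by (auto simp: mat_mult_assoc_dims)
  show "\<And>g S. g \<in> H \<Longrightarrow> S \<in> I_X \<Longrightarrow> twisted_act g S \<in> I_X" by (rule twisted_act_closed)
qed

lemma fixed_intertwiners:
  assumes g: "g \<in> H"
  shows "{S\<in>I_X. twisted_act g S = S} = {S \<in> carrier_mat nb na. S * g a = g b * S \<and> X b * S = S * X a}"
  using twisted_conj_fixed_iff[OF H_carrier(2)[OF g] H_carrier(1)[OF g] Aut_matinv(1)[OF H_Aut[OF g] a]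
      _ Aut_matinv(2,3)[OF H_Aut[OF g] a]]
  unfolding twisted_act_def intertw_def by auto


lemma finite_H: "finite H"
  using finite_End[of Q] Q H_End unfolding is_quiver_rep_def by (meson finite_subset subsetI)

lemma sum_lift_group:
  fixes f :: "_ \<Rightarrow> nat"
  shows "(\<Sum>g'\<in>H'. f g') = (\<Sum>g\<in>H. \<Sum>g'\<in>lifts g. f g')"
proof -
  have "finite H'"
    by (rule finite_subset[OF _ finite_End_Q']) (auto simp: lift_group_def intro: Aut_End)
  then have "(\<Sum>g\<in>H. \<Sum>g'\<in>{x \<in> H'. restr_to Q x = g}. f g') = (\<Sum>g'\<in>H'. f g')"
    by (rule sum.group[OF _ finite_H]) (auto simp: lift_group_def)
  moreover have "{x \<in> H'. restr_to Q x = g} = lifts g" if "g \<in> H" for g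
    using that unfolding lift_group_def lifts_def by auto
  ultimately show ?thesis by simp
qed

lemma card_lift_group: "card H' = card H * card (carrier_mat na nb :: 'a mat set)"
  using sum_lift_group[of "\<lambda>_. 1"] card_lifts by simp

lemma sum_fixed_points_lifts:
  assumes g: "g \<in> H"
  shows "(\<Sum>g'\<in>lifts g. card {Y\<in>fibre. conj_act Q' g' Y = Y})
    = card {S\<in>I_X. twisted_act g S = S} * card (carrier_mat na nb :: 'a mat set)"
proof -
  have "finite (lifts g)" by (rule finite_subset[OF _ finite_End_Q']) (auto simp: lifts_def intro: Aut_End)
  moreover have "finite fibre" using finite_End_Q' unfolding fibre_def by simp
  ultimately have "(\<Sum>g'\<in>lifts g. card {Y\<in>fibre. conj_act Q' g' Y = Y})
      = card (SIGMA g':lifts g. {Y\<in>fibre. conj_act Q' g' Y = Y})"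
    by (simp add: card_SigmaI)
  also have "\<dots> = card {(T,M). T \<in> carrier_mat na nb \<and> M \<in> carrier_mat na nb \<and>
      g a * T + M * X b = X a * M + T * g b}"
    by (rule card_fixed_pairs[OF g])
  also have "\<dots> = card {S \<in> carrier_mat nb na. S * g a = g b * S \<and> X b * S = S * X a}
      * card (carrier_mat na nb :: 'a mat set)"
    by (rule kernel_adjoint_duality[OF H_carrier(1)[OF g] X_carrier(1) H_carrier(2)[OF g] X_carrier(2)])
  finally show ?thesis using fixed_intertwiners[OF g] by simp
qed

lemma orbit_counts_eq: "num_orbits H' (conj_act Q') fibre = num_orbits H twisted_act I_X"
proof -
  let ?m = "card (carrier_mat na nb :: 'a mat set)"
  have "num_orbits H' (conj_act Q') fibre * (card H * ?m)
      = (\<Sum>g\<in>H. \<Sum>g'\<in>lifts g. card {Y\<in>fibre. conj_act Q' g' Y = Y})"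
    using burnside_fibre card_lift_group sum_lift_group by simp
  also have "\<dots> = (\<Sum>g\<in>H. card {S\<in>I_X. twisted_act g S = S} * ?m)"
    using sum_fixed_points_lifts by simp
  also have "\<dots> = (\<Sum>g\<in>H. card {S\<in>I_X. twisted_act g S = S}) * ?m" by (simp add: sum_distrib_right)
  also have "\<dots> = num_orbits H twisted_act I_X * (card H * ?m)"
    using burnside_intertwiners by (simp add: mult.assoc)
  finally have "num_orbits H' (conj_act Q') fibre * (card H * ?m) = num_orbits H twisted_act I_X * (card H * ?m)" .
  moreover have "card H * ?m > 0"
    using finite_H H card_carrier_mat_pos[of na nb, where 'a = 'a] card_gt_0_iff
    unfolding is_subgroup_Aut_def by fastforce
  ultimately show ?thesis by simp
qed

end


theorem mainTheorem9:
  fixes Q Q' :: "('v, 'e, 'a::{finite, field}) quiver_rep"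
    and a b :: 'v and X :: "'v \<Rightarrow> 'a mat" and H :: "('v \<Rightarrow> 'a mat) set"
  assumes "is_quiver_rep Q"
    and "a \<in> verts Q" and "b \<in> verts Q"
    and "is_quiver_rep Q'" and "is_Omega Q a b Q'"
    and "X \<in> End_Q Q"
    and "is_subgroup_Aut H Q"
    and "\<forall>g\<in>H. conj_act Q g X = X"
  shows "num_orbits (lift_group Q' Q H) (conj_act Q')
           {Y \<in> End_Q Q'. restr_to Q Y = X}
       = num_orbits H (\<lambda>g R. g b * R * matinv (g a)) (intertw (dim Q a) (dim Q b) (X a) (X b))"
proof -
  obtain c e1 e2 where shape:
      "c \<notin> verts Q" "verts Q' = insert c (verts Q)" "arrs Q' = arrs Q \<union> {e1, e2}"
      "\<forall>e\<in>arrs Q. src Q' e = src Q e \<and> tgt Q' e = tgt Q e \<and> amap Q' e = amap Q e"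
      "\<forall>v\<in>verts Q. dim Q' v = dim Q v"
      "src Q' e1 = a" "tgt Q' e1 = c" "src Q' e2 = c" "tgt Q' e2 = b"
    and exact_seq:
      "amap Q' e1 \<in> carrier_mat (dim Q' c) (dim Q a)" "amap Q' e2 \<in> carrier_mat (dim Q b) (dim Q' c)"
      "\<forall>u\<in>carrier_vec (dim Q a). amap Q' e1 *\<^sub>v u = 0\<^sub>v (dim Q' c) \<longrightarrow> u = 0\<^sub>v (dim Q a)"
      "\<forall>w\<in>carrier_vec (dim Q b). \<exists>v\<in>carrier_vec (dim Q' c). amap Q' e2 *\<^sub>v v = w"
      "\<forall>v\<in>carrier_vec (dim Q' c). amap Q' e2 *\<^sub>v v = 0\<^sub>v (dim Q b) \<longleftrightarrow>
          (\<exists>u\<in>carrier_vec (dim Q a). v = amap Q' e1 *\<^sub>v u)"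
    using assms(5) unfolding is_Omega_def by blast
  obtain s R where "split_ses (dim Q a) (dim Q b) (dim Q' c) (amap Q' e1) (amap Q' e2) s R"
    using split_ses_exists[OF exact_seq] by blast
  then have "omega_setting Q Q' a b c e1 e2 s R X H"
    unfolding omega_setting_def omega_setting_axioms_def using assms(1-4,6-8) shape by blast
  then interpret omega_setting Q Q' a b c e1 e2 s R X H .
  show ?thesis using orbit_counts_eq unfolding fibre_def twisted_act_def by simp
qed

end
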